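(* Let $E,F$ be vector lattices with $F$ Dedekind complete, and let $A\subset\mathcal{U}_{+}(E,F)$ be an increasing set. Then for every $T\in\mathcal{U}_{+}(E,F)$ and every $e\in E$, $$\sigma_{A}T(e)=\inf_{\varepsilon>0,\ S\in A}\ \sup\bigl\{\rho\, T(f):\ f\in\mathcal{F}_{e},\ \rho\in\mathfrak{B}(F),\ \rho\, S(f)\leq\varepsilon\, S(e)\bigr\}.$$
   Context: For vector lattices $E,F$, an operator (not necessarily linear) $T:E\to F$ is orthogonally additive if $T(x+y)=T(x)+T(y)$ whenever $x\perp y$; it is positive if $T(x)\geq 0$ for all $x\in E$; it is order bounded if it maps order bounded sets to order bounded sets. An orthogonally additive order bounded operator is an abstract Uryson operator; $\mathcal{U}(E,F)$ denotes the space of all of them, $\mathcal{U}_{+}(E,F)$ the positive ones, ordered by $S\leq T$ iff $T-S$ is positive; for $F$ Dedekind complete, $\mathcal{U}(E,F)$ is a Dedekind complete vector lattice. A fragment of $x\in E$ is $z\in E$ with $z\perp(x-z)$; $\mathcal{F}_{x}$ is the set of fragments of $x$. $\mathfrak{B}(F)$ is the Boolean algebra of band projections on $F$. For $A\subset\mathcal{U}(E,F)$, $\pi_{A}$ denotes the band projection in $\mathcal{U}(E,F)$ onto the band $\{A\}^{\perp\perp}$ generated by $A$, and $\sigma_{A}=I-\pi_{A}$. A set $A\subset\mathcal{U}_{+}(E,F)$ is increasing if for all $S,T\in A$ there is $Q\in A$ with $S\leq Q$ and $T\leq Q$. *)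

theory Defs
  imports Complex_Main
begin

text \<open>Vector lattices are modelled as types of class ordered_real_vector + lattice;
a Dedekind complete vector lattice additionally carries class conditionally_complete_lattice.\<close>

definition vl_abs :: "'a::{ordered_ab_group_add,lattice} \<Rightarrow> 'a" where
  "vl_abs x = sup x (- x)"

definition vl_disj :: "'a::{ordered_ab_group_add,lattice} \<Rightarrow> 'a \<Rightarrow> bool" where
  "vl_disj x y \<longleftrightarrow> inf (vl_abs x) (vl_abs y) = 0"

definition fragments :: "'a::{ordered_ab_group_add,lattice} \<Rightarrow> 'a set" where
  "fragments x = {z. vl_disj z (x - z)}"

definition orth_additive :: "('a::{ordered_ab_group_add,lattice} \<Rightarrow> 'b::ab_group_add) \<Rightarrow> bool" where
  "orth_additive T \<longleftrightarrow> (\<forall>x y. vl_disj x y \<longrightarrow> T (x + y) = T x + T y)"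

definition order_bounded_set :: "'a::order set \<Rightarrow> bool" where
  "order_bounded_set X \<longleftrightarrow> (\<exists>a b. X \<subseteq> {a..b})"

definition order_bounded_op :: "('a::order \<Rightarrow> 'b::order) \<Rightarrow> bool" where
  "order_bounded_op T \<longleftrightarrow> (\<forall>X. order_bounded_set X \<longrightarrow> order_bounded_set (T ` X))"

definition uryson :: "('a::{ordered_real_vector,lattice} \<Rightarrow> 'b::{ordered_real_vector,lattice}) \<Rightarrow> bool" where
  "uryson T \<longleftrightarrow> orth_additive T \<and> order_bounded_op T"

definition positive_op :: "('a \<Rightarrow> 'b::{zero,order}) \<Rightarrow> bool" where
  "positive_op T \<longleftrightarrow> (\<forall>x. 0 \<le> T x)"

definition U_plus :: "('a::{ordered_real_vector,lattice} \<Rightarrow> 'b::{ordered_real_vector,lattice}) set" where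
  "U_plus = {T. uryson T \<and> positive_op T}"

definition U_le :: "('a \<Rightarrow> 'b::{ordered_ab_group_add}) \<Rightarrow> ('a \<Rightarrow> 'b) \<Rightarrow> bool" where
  "U_le S T \<longleftrightarrow> positive_op (\<lambda>x. T x - S x)"

definition U_sup :: "('a::{ordered_real_vector,lattice} \<Rightarrow> 'b::{ordered_real_vector,lattice})
    \<Rightarrow> ('a \<Rightarrow> 'b) \<Rightarrow> ('a \<Rightarrow> 'b)" where
  "U_sup S T = (THE R. uryson R \<and> U_le S R \<and> U_le T R \<and>
      (\<forall>Q. uryson Q \<and> U_le S Q \<and> U_le T Q \<longrightarrow> U_le R Q))"

definition U_inf :: "('a::{ordered_real_vector,lattice} \<Rightarrow> 'b::{ordered_real_vector,lattice})
    \<Rightarrow> ('a \<Rightarrow> 'b) \<Rightarrow> ('a \<Rightarrow> 'b)" where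
  "U_inf S T = (THE R. uryson R \<and> U_le R S \<and> U_le R T \<and>
      (\<forall>Q. uryson Q \<and> U_le Q S \<and> U_le Q T \<longrightarrow> U_le Q R))"

definition U_abs :: "('a::{ordered_real_vector,lattice} \<Rightarrow> 'b::{ordered_real_vector,lattice})
    \<Rightarrow> ('a \<Rightarrow> 'b)" where
  "U_abs S = U_sup S (\<lambda>x. - S x)"

definition U_disj :: "('a::{ordered_real_vector,lattice} \<Rightarrow> 'b::{ordered_real_vector,lattice})
    \<Rightarrow> ('a \<Rightarrow> 'b) \<Rightarrow> bool" where
  "U_disj S R \<longleftrightarrow> U_inf (U_abs S) (U_abs R) = (\<lambda>x. 0)"

definition U_dcompl :: "('a::{ordered_real_vector,lattice} \<Rightarrow> 'b::{ordered_real_vector,lattice}) set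
    \<Rightarrow> ('a \<Rightarrow> 'b) set" where
  "U_dcompl X = {R. uryson R \<and> (\<forall>S\<in>X. U_disj S R)}"

definition U_band_gen :: "('a::{ordered_real_vector,lattice} \<Rightarrow> 'b::{ordered_real_vector,lattice}) set
    \<Rightarrow> ('a \<Rightarrow> 'b) set" where
  "U_band_gen X = U_dcompl (U_dcompl X)"

definition pi_A :: "('a::{ordered_real_vector,lattice} \<Rightarrow> 'b::{ordered_real_vector,lattice}) set
    \<Rightarrow> ('a \<Rightarrow> 'b) \<Rightarrow> ('a \<Rightarrow> 'b)" where
  "pi_A A T = (THE Q. Q \<in> U_band_gen A \<and> (\<lambda>x. T x - Q x) \<in> U_dcompl (U_band_gen A))"

definition sigma_A :: "('a::{ordered_real_vector,lattice} \<Rightarrow> 'b::{ordered_real_vector,lattice}) set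
    \<Rightarrow> ('a \<Rightarrow> 'b) \<Rightarrow> ('a \<Rightarrow> 'b)" where
  "sigma_A A T = (\<lambda>x. T x - pi_A A T x)"

definition increasing_set :: "('a \<Rightarrow> 'b::{ordered_ab_group_add}) set \<Rightarrow> bool" where
  "increasing_set A \<longleftrightarrow> (\<forall>S\<in>A. \<forall>T\<in>A. \<exists>Q\<in>A. U_le S Q \<and> U_le T Q)"

definition vl_ideal :: "'b::{ordered_real_vector,lattice} set \<Rightarrow> bool" where
  "vl_ideal B \<longleftrightarrow> 0 \<in> B \<and> (\<forall>x\<in>B. \<forall>y\<in>B. x + y \<in> B) \<and> (\<forall>c x. x \<in> B \<longrightarrow> c *\<^sub>R x \<in> B)
     \<and> (\<forall>x y. y \<in> B \<and> vl_abs x \<le> vl_abs y \<longrightarrow> x \<in> B)"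

definition is_lub_of :: "'b::order set \<Rightarrow> 'b \<Rightarrow> bool" where
  "is_lub_of D s \<longleftrightarrow> (\<forall>d\<in>D. d \<le> s) \<and> (\<forall>u. (\<forall>d\<in>D. d \<le> u) \<longrightarrow> s \<le> u)"

definition vl_band :: "'b::{ordered_real_vector,lattice} set \<Rightarrow> bool" where
  "vl_band B \<longleftrightarrow> vl_ideal B \<and> (\<forall>D s. D \<subseteq> B \<and> is_lub_of D s \<longrightarrow> s \<in> B)"

definition vl_dcompl :: "'b::{ordered_real_vector,lattice} set \<Rightarrow> 'b set" where
  "vl_dcompl B = {y. \<forall>x\<in>B. vl_disj x y}"

definition band_projection :: "('b::{ordered_real_vector,lattice} \<Rightarrow> 'b) \<Rightarrow> bool" where
  "band_projection \<rho> \<longleftrightarrow> (\<exists>B. vl_band B \<and> (\<forall>x. \<rho> x \<in> B \<and> x - \<rho> x \<in> vl_dcompl B))"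

end

(*
  Since A is increasing, the band projection pi_A T is the supremum of the directed family
  T \<sqinter> nS (n \<in> \<nat>, S \<in> A), and an infimum of Uryson operators is computed over fragments;
  hence sigma_A T(e) = inf_{n,S} sup_{f \<in> F_e} (T f - n S f).  It remains to compare these
  "excesses" with the suprema M(\<epsilon>, S) of the statement.  If \<rho> S f \<le> \<epsilon> S e, then
  \<rho> T f \<le> (T f - n S f)^+ + n\<epsilon> S e, and letting \<epsilon> \<rightarrow> 0 bounds the infimum of the M(\<epsilon>, S) by every
  excess.  Conversely, projecting away the band generated by (S f - \<epsilon> S e)^+ splits T f - n S f
  into an element of the set defining M(\<epsilon>, S) plus a term dominated by the component of
  (T e - n\<epsilon> S e)^+ in the band of \<epsilon> S e, and that component vanishes as n \<rightarrow> \<infinity> by the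
  Archimedean property of F.
*)

theory Submission
  imports Defs "HOL-Library.Lattice_Algebras"
begin

text \<open>The sort {ordered_ab_group_add, lattice} is not a subclass of lattice_ab_group_add, so the
  lattice-group facts of HOL-Library are made available through the class locale.\<close>

interpretation LG: lattice_ab_group_add "(+)" "0::'a::{ordered_ab_group_add,lattice}" "(-)" uminus "(\<le>)" "(<)" inf sup
  by unfold_locales

section \<open>Lattice-ordered groups\<close>

definition pos_part :: "'a::{ordered_ab_group_add,lattice} \<Rightarrow> 'a" where "pos_part x = sup x 0"

definition neg_part :: "'a::{ordered_ab_group_add,lattice} \<Rightarrow> 'a" where "neg_part x = sup (- x) 0"

fun nsmul :: "nat \<Rightarrow> 'a::ab_group_add \<Rightarrow> 'a" where
  "nsmul 0 x = 0" | "nsmul (Suc n) x = x + nsmul n x"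

lemma vl_abs_ge: "(x::'a::{ordered_ab_group_add,lattice}) \<le> vl_abs x" "- x \<le> vl_abs x"
  by (simp_all add: vl_abs_def)

lemma vl_abs_nonneg: "0 \<le> vl_abs (x::'a::{ordered_ab_group_add,lattice})"
proof -
  have "x + (- x) \<le> vl_abs x + vl_abs x" using vl_abs_ge[of x] by (rule add_mono)
  then show ?thesis by simp
qed

lemma vl_abs_uminus[simp]: "vl_abs (- (x::'a::{ordered_ab_group_add,lattice})) = vl_abs x"
  by (simp add: vl_abs_def sup_commute)

lemma vl_abs_of_nonneg: "0 \<le> (x::'a::{ordered_ab_group_add,lattice}) \<Longrightarrow> vl_abs x = x"
proof -
  assume "0 \<le> x"
  then have "- x \<le> x" using order_trans[of "-x" 0 x] by simp
  then show ?thesis unfolding vl_abs_def by (rule sup.absorb1)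
qed

lemma vl_abs_leI: "(x::'a::{ordered_ab_group_add,lattice}) \<le> c \<Longrightarrow> - x \<le> c \<Longrightarrow> vl_abs x \<le> c"
  by (simp add: vl_abs_def)

lemma vl_abs_eq_0_iff: "vl_abs (x::'a::{ordered_ab_group_add,lattice}) = 0 \<longleftrightarrow> x = 0"
  unfolding vl_abs_def by (rule LG.sup_0_eq_0)

lemma vl_abs_0[simp]: "vl_abs (0::'a::{ordered_ab_group_add,lattice}) = 0"
  by (simp add: vl_abs_eq_0_iff)

lemma pos_part_nonneg: "0 \<le> pos_part (x::'a::{ordered_ab_group_add,lattice})" and neg_part_nonneg: "0 \<le> neg_part x"
  by (simp_all add: pos_part_def neg_part_def)

lemma pos_part_diff_neg_part: "pos_part x - neg_part x = (x::'a::{ordered_ab_group_add,lattice})"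
proof -
  have "neg_part x = - inf x 0" by (simp add: neg_part_def LG.neg_inf_eq_sup)
  then have "pos_part x - neg_part x = sup x 0 + inf x 0" by (simp add: pos_part_def)
  also have "\<dots> = x + 0" by (rule LG.add_eq_inf_sup[symmetric])
  finally show ?thesis by simp
qed

lemma vl_abs_eq_pos_part_add_neg_part: "vl_abs x = pos_part x + neg_part (x::'a::{ordered_ab_group_add,lattice})"
proof -
  have "pos_part x + neg_part x = sup (x + neg_part x) (neg_part x)" by (simp add: pos_part_def LG.add_sup_distrib_right)
  also have "x + neg_part x = sup 0 x" by (simp add: neg_part_def LG.add_sup_distrib_left)
  also have "sup (sup 0 x) (neg_part x) = sup (vl_abs x) 0" by (simp add: neg_part_def vl_abs_def sup_aci)
  also have "\<dots> = vl_abs x" using vl_abs_nonneg[of x] by (simp add: sup.absorb1)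
  finally show ?thesis by simp
qed

lemma pos_part_le_vl_abs: "pos_part x \<le> vl_abs (x::'a::{ordered_ab_group_add,lattice})"
  unfolding vl_abs_eq_pos_part_add_neg_part[of x] by (rule add_increasing2[OF neg_part_nonneg order_refl])

lemma neg_part_le_vl_abs: "neg_part x \<le> vl_abs (x::'a::{ordered_ab_group_add,lattice})"
  unfolding vl_abs_eq_pos_part_add_neg_part[of x] by (rule add_increasing[OF pos_part_nonneg order_refl])

lemma vl_abs_le_of_between:
  fixes x :: "'a::{ordered_ab_group_add,lattice}"
  assumes "a \<le> x" "x \<le> b"
  shows "vl_abs x \<le> vl_abs a + vl_abs b"
proof (rule vl_abs_leI)
  have "x \<le> vl_abs b" using assms(2) vl_abs_ge(1)[of b] by (rule order_trans)
  then show "x \<le> vl_abs a + vl_abs b" using vl_abs_nonneg[of a] by (simp add: add_increasing)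
  have "- x \<le> - a" using assms(1) by (simp only: neg_le_iff_le)
  then have "- x \<le> vl_abs a" using vl_abs_ge(2)[of a] by (rule order_trans)
  then show "- x \<le> vl_abs a + vl_abs b" using vl_abs_nonneg[of b] by (simp add: add_increasing2)
qed

lemma vl_abs_triangle: "vl_abs (a + b) \<le> vl_abs a + vl_abs (b::'a::{ordered_ab_group_add,lattice})"
proof (rule vl_abs_leI)
  show "a + b \<le> vl_abs a + vl_abs b" by (rule add_mono[OF vl_abs_ge(1) vl_abs_ge(1)])
  have "- a + - b \<le> vl_abs a + vl_abs b" by (rule add_mono[OF vl_abs_ge(2) vl_abs_ge(2)])
  then show "- (a + b) \<le> vl_abs a + vl_abs b" by (simp add: add.commute)
qed

lemma vl_abs_diff_le: "vl_abs (a - b) \<le> vl_abs a + vl_abs (b::'a::{ordered_ab_group_add,lattice})"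
  using vl_abs_triangle[of a "-b"] by simp

lemma inf_add_le_add_inf:
  fixes x y z :: "'a::{ordered_ab_group_add,lattice}"
  assumes "0 \<le> x" "0 \<le> y" "0 \<le> z"
  shows "inf x (y + z) \<le> inf x y + inf x z"
proof -
  let ?t = "inf x (y + z)"
  have "?t - inf x y = ?t + sup (- x) (- y)"
    by (simp only: diff_conv_add_uminus LG.neg_inf_eq_sup)
  also have "\<dots> = sup (?t + - x) (?t + - y)" by (rule LG.add_sup_distrib_left)
  finally have e: "?t - inf x y = sup (?t - x) (?t - y)" by (simp only: diff_conv_add_uminus)
  have z0: "0 \<le> inf x z" using assms by simp
  have "?t - x \<le> 0" by simp
  then have 1: "?t - x \<le> inf x z" using z0 by (rule order_trans)
  have 2: "?t - y \<le> inf x z"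
  proof (rule le_infI)
    have "?t \<le> ?t + y" using assms(2) by (simp only: le_add_same_cancel1)
    then have "?t - y \<le> ?t" by (simp only: diff_le_eq)
    also have "?t \<le> x" by simp
    finally show "?t - y \<le> x" .
    have "?t \<le> y + z" by simp
    then show "?t - y \<le> z" by (simp add: diff_le_eq add.commute)
  qed
  have "?t - inf x y \<le> inf x z" unfolding e using 1 2 by (rule le_supI)
  then have "?t \<le> inf x z + inf x y" by (simp only: diff_le_eq)
  then show ?thesis by (simp only: add.commute)
qed

lemma vl_disj_sym: "vl_disj x y \<longleftrightarrow> vl_disj y x"
  by (simp add: vl_disj_def inf_commute)

lemma vl_disj_0_right[simp]: "vl_disj x 0"
  unfolding vl_disj_def using vl_abs_nonneg[of x] by (simp add: inf.absorb2)

lemma vl_disj_0_left[simp]: "vl_disj 0 x"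
  unfolding vl_disj_def using vl_abs_nonneg[of x] by (simp add: inf.absorb1)

lemma vl_disj_mono: "vl_disj x y \<Longrightarrow> vl_abs z \<le> vl_abs y \<Longrightarrow> vl_disj x (z::'a::{ordered_ab_group_add,lattice})"
proof -
  assume a: "vl_disj x y" "vl_abs z \<le> vl_abs y"
  have h: "inf (vl_abs x) (vl_abs z) \<le> inf (vl_abs x) (vl_abs y)" by (rule inf_mono[OF order_refl a(2)])
  have "inf (vl_abs x) (vl_abs z) \<le> 0" using h by (simp only: a(1)[unfolded vl_disj_def])
  moreover have "0 \<le> inf (vl_abs x) (vl_abs z)" by (simp add: vl_abs_nonneg)
  ultimately show ?thesis unfolding vl_disj_def by (rule order.antisym)
qed

lemma vl_disj_mono_nonneg: "vl_disj x y \<Longrightarrow> 0 \<le> z \<Longrightarrow> z \<le> vl_abs y \<Longrightarrow> vl_disj x (z::'a::{ordered_ab_group_add,lattice})"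
  by (simp add: vl_abs_of_nonneg vl_disj_mono)

lemma vl_disj_add: "vl_disj x y \<Longrightarrow> vl_disj x z \<Longrightarrow> vl_disj x (y + z::'a::{ordered_ab_group_add,lattice})"
proof -
  assume a: "vl_disj x y" "vl_disj x z"
  have "inf (vl_abs x) (vl_abs (y + z)) \<le> inf (vl_abs x) (vl_abs y + vl_abs z)"
    using vl_abs_triangle by (intro inf_mono) simp_all
  also have "\<dots> \<le> inf (vl_abs x) (vl_abs y) + inf (vl_abs x) (vl_abs z)"
    by (rule inf_add_le_add_inf) (simp_all add: vl_abs_nonneg)
  also have "\<dots> = 0" using a by (simp add: vl_disj_def)
  finally have "inf (vl_abs x) (vl_abs (y + z)) \<le> 0" .
  moreover have "0 \<le> inf (vl_abs x) (vl_abs (y + z))" by (simp add: vl_abs_nonneg)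
  ultimately show ?thesis unfolding vl_disj_def by (rule order.antisym)
qed

lemma vl_disj_uminus: "vl_disj x (- y) \<longleftrightarrow> vl_disj x (y::'a::{ordered_ab_group_add,lattice})"
  by (simp add: vl_disj_def)

lemma vl_disj_diff: "vl_disj x y \<Longrightarrow> vl_disj x z \<Longrightarrow> vl_disj x (y - z::'a::{ordered_ab_group_add,lattice})"
proof -
  assume a: "vl_disj x y" "vl_disj x z"
  then have "vl_disj x (- z)" by (simp only: vl_disj_uminus)
  with a(1) have "vl_disj x (y + - z)" by (rule vl_disj_add)
  then show ?thesis by (simp only: diff_conv_add_uminus)
qed

lemma vl_disj_self: "vl_disj x x \<Longrightarrow> x = (0::'a::{ordered_ab_group_add,lattice})"
  by (simp add: vl_disj_def vl_abs_eq_0_iff)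

lemma add_eq_sup_of_inf_0:
  fixes p q :: "'a::{ordered_ab_group_add,lattice}"
  assumes "inf p q = 0" shows "p + q = sup p q"
  using LG.add_eq_inf_sup[of p q] assms by simp

lemma nsmul_eq_scaleR: "nsmul n x = real n *\<^sub>R (x::'a::real_vector)"
  by (induction n) (simp_all add: algebra_simps)

lemma nsmul_mono: "x \<le> y \<Longrightarrow> nsmul n x \<le> nsmul n (y::'a::ordered_ab_group_add)"
  by (induction n) (simp_all add: add_mono)

lemma nsmul_nonneg: "0 \<le> x \<Longrightarrow> 0 \<le> nsmul n (x::'a::ordered_ab_group_add)"
  by (induction n) (simp_all add: add_nonneg_nonneg)

lemma nsmul_le_nsmul: "0 \<le> x \<Longrightarrow> m \<le> n \<Longrightarrow> nsmul m x \<le> nsmul n (x::'a::ordered_ab_group_add)"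
proof (induction n)
  case 0 then show ?case by simp
next
  case (Suc n)
  show ?case
  proof (cases "m = Suc n")
    case True then show ?thesis by simp
  next
    case False
    then have "m \<le> n" using Suc.prems by simp
    then have "nsmul m x \<le> nsmul n x" using Suc by simp
    also have "\<dots> \<le> x + nsmul n x" using Suc.prems by (simp add: add_increasing)
    finally show ?thesis by simp
  qed
qed

lemma nsmul_0_right[simp]: "nsmul n (0::'a::ab_group_add) = 0"
  by (induction n) simp_all

lemma nsmul_nsmul: "nsmul k (nsmul N x) = nsmul (k * N) (x::'a::real_vector)"
  by (simp add: nsmul_eq_scaleR)

lemma vl_disj_nsmul: "vl_disj x y \<Longrightarrow> vl_disj x (nsmul n (y::'a::{ordered_ab_group_add,lattice}))"
  by (induction n) (simp_all add: vl_disj_add)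

lemma inf_pos_part_neg_part: "inf (pos_part x) (neg_part x) = (0::'a::{ordered_ab_group_add,lattice})"
proof -
  have "pos_part x + neg_part x = sup (pos_part x) (neg_part x) + inf (pos_part x) (neg_part x)" by (rule LG.add_eq_inf_sup)
  moreover have "sup (pos_part x) (neg_part x) = sup (vl_abs x) 0"
    unfolding pos_part_def neg_part_def vl_abs_def by (simp add: sup_aci)
  moreover have "sup (vl_abs x) 0 = vl_abs x" using vl_abs_nonneg[of x] by (simp add: sup.absorb1)
  ultimately show ?thesis by (simp add: vl_abs_eq_pos_part_add_neg_part)
qed

lemma inf_add_eq_0:
  fixes x y z :: "'a::{ordered_ab_group_add,lattice}"
  assumes "0 \<le> x" "0 \<le> y" "0 \<le> z" "inf x y = 0" "inf x z = 0"
  shows "inf x (y + z) = 0"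
proof -
  have "inf x (y + z) \<le> 0" using inf_add_le_add_inf[OF assms(1-3)] assms(4,5) by simp
  moreover have "0 \<le> inf x (y + z)" using assms by simp
  ultimately show ?thesis by simp
qed

lemma vl_abs_diff_of_inf_0:
  fixes p q :: "'a::{ordered_ab_group_add,lattice}"
  assumes "0 \<le> p" "0 \<le> q" "inf p q = 0"
  shows "vl_abs (p - q) = p + q"
proof (rule order.antisym)
  show "vl_abs (p - q) \<le> p + q" using vl_abs_diff_le[of p q] assms by (simp add: vl_abs_of_nonneg)
  let ?s = "vl_abs (p - q)"
  have "p + q - ?s \<le> p + q - (p - q)" using vl_abs_ge(1)[of "p-q"] by (rule diff_left_mono)
  then have 1: "p + q - ?s \<le> q + q" by (simp add: algebra_simps)
  have "p + q - ?s \<le> p + q - (- (p - q))" using vl_abs_ge(2)[of "p-q"] by (rule diff_left_mono)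
  then have 2: "p + q - ?s \<le> p + p" by (simp add: algebra_simps)
  have i1: "inf q (p + p) = 0" using inf_add_eq_0[of q p p] assms by (simp add: inf_commute)
  have "inf (p + p) (q + q) = 0"
    using inf_add_eq_0[of "p+p" q q] assms i1 by (simp add: inf_commute add_nonneg_nonneg)
  moreover have "p + q - ?s \<le> inf (p + p) (q + q)" using 2 1 by (rule le_infI)
  ultimately have "p + q - ?s \<le> 0" by simp
  then show "p + q \<le> ?s" by (simp only: diff_le_0_iff_le)
qed

lemma inf_eq_0_of_le_vl_abs: "inf (vl_abs x) (vl_abs y) = 0 \<Longrightarrow> 0 \<le> a \<Longrightarrow> a \<le> vl_abs x \<Longrightarrow> 0 \<le> b \<Longrightarrow> b \<le> vl_abs y
   \<Longrightarrow> inf a b = (0::'a::{ordered_ab_group_add,lattice})"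
proof -
  assume h: "inf (vl_abs x) (vl_abs y) = 0" "0 \<le> a" "a \<le> vl_abs x" "0 \<le> b" "b \<le> vl_abs y"
  have "inf a b \<le> inf (vl_abs x) (vl_abs y)" using h by (intro inf_mono)
  then show ?thesis using h by (simp add: order.antisym)
qed

lemma vl_abs_add_of_disj:
  fixes a b :: "'a::{ordered_ab_group_add,lattice}"
  assumes "vl_disj a b"
  shows "vl_abs (a + b) = vl_abs a + vl_abs b"
proof -
  let ?P = "pos_part a + pos_part b" and ?N = "neg_part a + neg_part b"
  have d: "inf (vl_abs a) (vl_abs b) = 0" using assms by (simp add: vl_disj_def)
  have d': "inf (vl_abs b) (vl_abs a) = 0" using d by (simp add: inf_commute)
  have "?P - ?N = (pos_part a - neg_part a) + (pos_part b - neg_part b)" by (simp add: algebra_simps)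
  then have e: "a + b = ?P - ?N" by (simp add: pos_part_diff_neg_part)
  have z1: "inf (pos_part a) (neg_part b) = 0" by (rule inf_eq_0_of_le_vl_abs[OF d pos_part_nonneg pos_part_le_vl_abs neg_part_nonneg neg_part_le_vl_abs])
  have z2: "inf (pos_part b) (neg_part a) = 0" by (rule inf_eq_0_of_le_vl_abs[OF d' pos_part_nonneg pos_part_le_vl_abs neg_part_nonneg neg_part_le_vl_abs])
  have "inf (pos_part a) ?N = 0" using inf_add_eq_0[of "pos_part a" "neg_part a" "neg_part b"] z1 inf_pos_part_neg_part pos_part_nonneg neg_part_nonneg by blast
  moreover have "inf (pos_part b) ?N = 0" using inf_add_eq_0[of "pos_part b" "neg_part a" "neg_part b"] z2 inf_pos_part_neg_part pos_part_nonneg neg_part_nonneg by blast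
  ultimately have "inf ?N (pos_part a) = 0" "inf ?N (pos_part b) = 0" by (simp_all add: inf_commute)
  then have "inf ?N ?P = 0"
    by (intro inf_add_eq_0) (auto simp: add_nonneg_nonneg pos_part_nonneg neg_part_nonneg)
  then have "inf ?P ?N = 0" by (simp add: inf_commute)
  then have "vl_abs (?P - ?N) = ?P + ?N"
    by (rule vl_abs_diff_of_inf_0[OF add_nonneg_nonneg[OF pos_part_nonneg pos_part_nonneg] add_nonneg_nonneg[OF neg_part_nonneg neg_part_nonneg]])
  then have "vl_abs (a + b) = ?P + ?N" unfolding e .
  also have "?P + ?N = vl_abs a + vl_abs b" unfolding vl_abs_eq_pos_part_add_neg_part by (simp add: algebra_simps)
  finally show ?thesis .
qed

lemma inf_nsmul_eq_0:
  fixes m c :: "'a::{ordered_ab_group_add,lattice}"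
  assumes "0 \<le> m" "0 \<le> c" "inf m c = 0"
  shows "inf m (nsmul n c) = 0"
proof (induction n)
  case 0 then show ?case using assms by (simp add: inf.absorb2)
next
  case (Suc n)
  then show ?case using inf_add_eq_0[OF assms(1,2) nsmul_nonneg[OF assms(2)] assms(3)] by simp
qed

lemma nsmul_inf_pos_part_le:
  fixes a b :: "'a::{ordered_ab_group_add,lattice}"
  assumes a0: "0 \<le> a" and b0: "0 \<le> b"
  shows "nsmul n (inf (pos_part (a - nsmul n b)) b) \<le> a"
proof -
  let ?p = "pos_part (a - nsmul n b)" and ?m = "neg_part (a - nsmul n b)"
  let ?c = "inf ?p b"
  have c0: "0 \<le> ?c" using b0 pos_part_nonneg by simp
  have "inf ?m ?c \<le> inf ?m ?p" by (intro inf_mono) simp_all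
  also have "inf ?m ?p = 0" using inf_pos_part_neg_part by (metis inf_commute)
  finally have le0: "inf ?m ?c \<le> 0" .
  have "0 \<le> inf ?m ?c" using c0 neg_part_nonneg by simp
  then have "inf ?m ?c = 0" using le0 by (simp add: order.antisym)
  then have mc: "inf ?m (nsmul n ?c) = 0" by (rule inf_nsmul_eq_0[OF neg_part_nonneg c0])
  have "nsmul n ?c \<le> nsmul n b" by (rule nsmul_mono) simp
  also have "nsmul n b = a - ?p + ?m" using pos_part_diff_neg_part[of "a - nsmul n b"] by (simp add: algebra_simps)
  finally have le: "nsmul n ?c \<le> a - ?p + ?m" .
  have pa: "?p \<le> a" unfolding pos_part_def using a0 b0 nsmul_nonneg[OF b0, of n] by (simp add: le_supI)
  then have ap0: "0 \<le> a - ?p" by simp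
  have "nsmul n ?c = inf (nsmul n ?c) (a - ?p + ?m)" using le by (simp add: inf.absorb1)
  also have "\<dots> \<le> inf (nsmul n ?c) (a - ?p) + inf (nsmul n ?c) ?m"
    by (rule inf_add_le_add_inf[OF nsmul_nonneg[OF c0] ap0 neg_part_nonneg])
  also have "inf (nsmul n ?c) ?m = 0" using mc by (simp add: inf_commute)
  also have "inf (nsmul n ?c) (a - ?p) + 0 \<le> a - ?p" by simp
  also have "a - ?p \<le> a" using pos_part_nonneg by simp
  finally show ?thesis .
qed

lemma diff_inf_eq_pos_part: "t - inf t m = pos_part (t - (m::'a::{ordered_ab_group_add,lattice}))"
proof -
  have "t - inf t m = t + sup (- t) (- m)" by (simp only: diff_conv_add_uminus LG.neg_inf_eq_sup)
  also have "\<dots> = sup (t + - t) (t + - m)" by (rule LG.add_sup_distrib_left)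
  also have "\<dots> = pos_part (t - m)" by (simp add: pos_part_def sup_commute)
  finally show ?thesis .
qed

lemma is_lub_of_unique: "is_lub_of D s \<Longrightarrow> is_lub_of D t \<Longrightarrow> s = (t::'a::order)"
  unfolding is_lub_of_def by (meson order.antisym)

lemma is_lub_of_inf:
  fixes a s :: "'a::{ordered_ab_group_add,lattice}"
  assumes "is_lub_of D s" "D \<noteq> {}"
  shows "is_lub_of (inf a ` D) (inf a s)"
  unfolding is_lub_of_def
proof (intro conjI allI impI ballI)
  fix x assume "x \<in> inf a ` D"
  then obtain d where d: "d \<in> D" "x = inf a d" by auto
  then have "d \<le> s" using assms(1) by (simp add: is_lub_of_def)
  then have "inf a d \<le> inf a s" by (rule inf_mono[OF order_refl])
  then show "x \<le> inf a s" using d by simp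
next
  fix u assume u: "\<forall>x\<in>inf a ` D. x \<le> u"
  have "d \<le> u + sup a s - a" if d: "d \<in> D" for d
  proof -
    have "a + d = sup a d + inf a d" by (rule LG.add_eq_inf_sup)
    moreover have "inf a d \<le> u" using u d by auto
    moreover have "sup a d \<le> sup a s" using d assms(1) by (simp add: is_lub_of_def sup.coboundedI2)
    ultimately have "a + d \<le> sup a s + u" by (metis add_mono add.commute)
    then show ?thesis by (simp add: algebra_simps le_diff_eq)
  qed
  then have "s \<le> u + sup a s - a" using assms(1) by (simp add: is_lub_of_def)
  moreover have "a + s = sup a s + inf a s" by (rule LG.add_eq_inf_sup)
  ultimately have "sup a s + inf a s \<le> sup a s + u" by (simp add: algebra_simps le_diff_eq)
  then show "inf a s \<le> u" by simp
qed

lemma is_lub_of_pos_part: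
  fixes s :: "'a::{ordered_ab_group_add,lattice}"
  assumes lub: "is_lub_of D s" and "D \<noteq> {}"
  shows "is_lub_of (pos_part ` D) (pos_part s)"
  unfolding is_lub_of_def
proof (intro conjI allI impI ballI)
  fix y assume "y \<in> pos_part ` D"
  then obtain d where "d \<in> D" "y = pos_part d" by auto
  then show "y \<le> pos_part s" using lub by (auto simp: is_lub_of_def pos_part_def intro: le_supI1)
next
  fix u assume u: "\<forall>y\<in>pos_part ` D. y \<le> u"
  obtain d0 where "d0 \<in> D" using assms(2) by blast
  then have "0 \<le> u" using u pos_part_nonneg by (metis imageI order_trans)
  moreover have "\<forall>d\<in>D. d \<le> u" using u by (auto simp: pos_part_def)
  then have "s \<le> u" using lub by (simp add: is_lub_of_def)
  ultimately show "pos_part s \<le> u" by (simp add: pos_part_def)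
qed

lemma vl_disj_is_lub_of:
  fixes s :: "'a::{ordered_ab_group_add,lattice}"
  assumes lub: "is_lub_of D s" and d0: "d0 \<in> D" and disj: "\<And>d. d \<in> D \<Longrightarrow> vl_disj x d"
  shows "vl_disj x s"
proof -
  have D: "D \<noteq> {}" using d0 by blast
  have "is_lub_of (inf (vl_abs x) ` pos_part ` D) (inf (vl_abs x) (pos_part s))"
    by (rule is_lub_of_inf[OF is_lub_of_pos_part[OF lub D]]) (use D in simp)
  moreover have "inf (vl_abs x) (pos_part d) = 0" if "d \<in> D" for d
    using inf_eq_0_of_le_vl_abs[of x d, OF _ vl_abs_nonneg order_refl pos_part_nonneg pos_part_le_vl_abs] disj[OF that]
    by (simp add: vl_disj_def)
  then have "inf (vl_abs x) ` pos_part ` D = {0}" using D by (auto simp: image_image)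
  moreover have "is_lub_of {0} 0" by (simp add: is_lub_of_def)
  ultimately have pos: "inf (vl_abs x) (pos_part s) = 0" using is_lub_of_unique by metis
  have "d0 \<le> s" using lub d0 unfolding is_lub_of_def by blast
  then have "neg_part s \<le> neg_part d0" unfolding neg_part_def by (intro sup_mono) simp_all
  then have "inf (vl_abs x) (neg_part s) \<le> inf (vl_abs x) (neg_part d0)" by (rule inf_mono[OF order_refl])
  also have "inf (vl_abs x) (neg_part d0) = 0"
    using inf_eq_0_of_le_vl_abs[of x d0, OF _ vl_abs_nonneg order_refl neg_part_nonneg neg_part_le_vl_abs] disj[OF d0]
    by (simp add: vl_disj_def)
  finally have neg: "inf (vl_abs x) (neg_part s) \<le> 0" .
  have "inf (vl_abs x) (vl_abs s) \<le> inf (vl_abs x) (pos_part s) + inf (vl_abs x) (neg_part s)"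
    unfolding vl_abs_eq_pos_part_add_neg_part[of s] by (rule inf_add_le_add_inf[OF vl_abs_nonneg pos_part_nonneg neg_part_nonneg])
  also have "\<dots> \<le> 0" using pos neg by simp
  finally show ?thesis unfolding vl_disj_def by (simp add: order.antisym vl_abs_nonneg)
qed

section \<open>Fragments\<close>

lemma fragments_0[simp]: "0 \<in> fragments x" and fragments_self[simp]: "x \<in> fragments x"
  by (simp_all add: fragments_def)

lemma fragments_nonempty[simp]: "fragments (x::'a::{ordered_ab_group_add,lattice}) \<noteq> {}"
  using fragments_0[of x] by blast

lemma fragments_diff: "z \<in> fragments x \<Longrightarrow> x - z \<in> fragments (x::'a::{ordered_ab_group_add,lattice})"
  by (simp add: fragments_def vl_disj_sym)

lemma vl_abs_fragment: "z \<in> fragments x \<Longrightarrow> vl_abs x = vl_abs z + vl_abs (x - z::'a::{ordered_ab_group_add,lattice})"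
  unfolding fragments_def using vl_abs_add_of_disj by fastforce

lemma vl_abs_fragment_le: "z \<in> fragments x \<Longrightarrow> vl_abs z \<le> vl_abs (x::'a::{ordered_ab_group_add,lattice})"
proof -
  assume z: "z \<in> fragments x"
  have "vl_abs z \<le> vl_abs z + vl_abs (x - z)" by (rule add_increasing2[OF vl_abs_nonneg order_refl])
  then show ?thesis using vl_abs_fragment[OF z] by simp
qed

lemma fragment_bounds: "z \<in> fragments x \<Longrightarrow> - vl_abs x \<le> z \<and> z \<le> vl_abs (x::'a::{ordered_ab_group_add,lattice})"
proof -
  assume "z \<in> fragments x"
  then have l: "vl_abs z \<le> vl_abs x" by (rule vl_abs_fragment_le)
  have "z \<le> vl_abs x" using vl_abs_ge(1)[of z] l by (rule order_trans)
  moreover have "- z \<le> vl_abs x" using vl_abs_ge(2)[of z] l by (rule order_trans)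
  ultimately show ?thesis by (simp add: minus_le_iff)
qed

lemma fragments_add:
  fixes u v a b :: "'a::{ordered_ab_group_add,lattice}"
  assumes uv: "vl_disj u v" and a: "a \<in> fragments u" and b: "b \<in> fragments v"
  shows "a + b \<in> fragments (u + v)" "vl_disj a b" "vl_disj (u - a) (v - b)"
proof -
  have la: "vl_abs a \<le> vl_abs u" "vl_abs (u - a) \<le> vl_abs u" using a vl_abs_fragment_le fragments_diff by blast+
  have lb: "vl_abs b \<le> vl_abs v" "vl_abs (v - b) \<le> vl_abs v" using b vl_abs_fragment_le fragments_diff by blast+
  have g: "vl_disj x y" if "vl_abs x \<le> vl_abs u" "vl_abs y \<le> vl_abs v" for x y
  proof -
    have "vl_disj u y" using vl_disj_mono[OF uv that(2)] .
    then have "vl_disj y u" by (simp add: vl_disj_sym)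
    then have "vl_disj y x" using vl_disj_mono that(1) by blast
    then show ?thesis by (simp add: vl_disj_sym)
  qed
  show "vl_disj a b" "vl_disj (u - a) (v - b)" using g la lb by auto
  have "vl_disj (a + b) ((u - a) + (v - b))"
  proof -
    have "vl_disj a (u - a)" using a by (simp add: fragments_def)
    moreover have "vl_disj a (v - b)" using g la lb by auto
    moreover have "vl_disj (u - a) b" using g la lb by auto
    then have "vl_disj b (u - a)" by (simp add: vl_disj_sym)
    moreover have "vl_disj b (v - b)" using b by (simp add: fragments_def)
    ultimately show ?thesis by (meson vl_disj_add vl_disj_sym)
  qed
  then show "a + b \<in> fragments (u + v)" by (simp add: fragments_def algebra_simps)
qed

lemma inf_add_of_inf_0:
  fixes p r s :: "'a::{ordered_ab_group_add,lattice}"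
  assumes "0 \<le> p" "0 \<le> r" "0 \<le> s" "inf r s = 0"
  shows "inf p r + inf p s = inf p (r + s)"
proof (rule order.antisym)
  show "inf p (r + s) \<le> inf p r + inf p s" by (rule inf_add_le_add_inf) (use assms in auto)
  have "inf (inf p r) (inf p s) \<le> inf r s" by (intro le_infI) (auto intro: le_infI1 le_infI2)
  then have "inf (inf p r) (inf p s) = 0" using assms by (simp add: order.antisym)
  then have "inf p r + inf p s = sup (inf p r) (inf p s)" by (rule add_eq_sup_of_inf_0)
  also have "\<dots> \<le> inf p (r + s)"
    using assms by (auto intro!: le_infI intro: le_infI1 le_infI2 add_increasing add_increasing2)
  finally show "inf p r + inf p s \<le> inf p (r + s)" .
qed

definition frag_part :: "'a::{ordered_ab_group_add,lattice} \<Rightarrow> 'a \<Rightarrow> 'a" where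
  "frag_part z u = inf (pos_part z) (vl_abs u) - inf (neg_part z) (vl_abs u)"

lemma frag_part_add:
  fixes u v z :: "'a::{ordered_ab_group_add,lattice}"
  assumes uv: "vl_disj u v" and z: "z \<in> fragments (u + v)"
  shows "frag_part z u + frag_part z v = z"
proof -
  have ax: "vl_abs (u + v) = vl_abs u + vl_abs v" using vl_abs_add_of_disj[OF uv] .
  have d: "inf (vl_abs u) (vl_abs v) = 0" using uv by (simp add: vl_disj_def)
  have "inf (pos_part z) (vl_abs u) + inf (pos_part z) (vl_abs v) = inf (pos_part z) (vl_abs (u + v))"
    using inf_add_of_inf_0[OF pos_part_nonneg vl_abs_nonneg vl_abs_nonneg d] ax by simp
  also have "\<dots> = pos_part z" by (rule inf.absorb1) (rule order_trans[OF pos_part_le_vl_abs vl_abs_fragment_le[OF z]])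
  finally have 1: "inf (pos_part z) (vl_abs u) + inf (pos_part z) (vl_abs v) = pos_part z" .
  have "inf (neg_part z) (vl_abs u) + inf (neg_part z) (vl_abs v) = inf (neg_part z) (vl_abs (u + v))"
    using inf_add_of_inf_0[OF neg_part_nonneg vl_abs_nonneg vl_abs_nonneg d] ax by simp
  also have "\<dots> = neg_part z" by (rule inf.absorb1) (rule order_trans[OF neg_part_le_vl_abs vl_abs_fragment_le[OF z]])
  finally have 2: "inf (neg_part z) (vl_abs u) + inf (neg_part z) (vl_abs v) = neg_part z" .
  have "frag_part z u + frag_part z v = (inf (pos_part z) (vl_abs u) + inf (pos_part z) (vl_abs v))
     - (inf (neg_part z) (vl_abs u) + inf (neg_part z) (vl_abs v))"
    by (simp only: frag_part_def) (simp only: diff_conv_add_uminus minus_add_distrib add.assoc add.left_commute add.commute)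
  also have "\<dots> = z" unfolding 1 2 by (rule pos_part_diff_neg_part)
  finally show ?thesis .
qed

lemma frag_part_fragment:
  fixes u v z :: "'a::{ordered_ab_group_add,lattice}"
  assumes uv: "vl_disj u v" and z: "z \<in> fragments (u + v)"
  shows "frag_part z u \<in> fragments u"
proof -
  let ?x = "u + v"
  let ?p1 = "inf (pos_part z) (vl_abs u)" and ?q1 = "inf (neg_part z) (vl_abs u)"
  let ?p2 = "inf (pos_part z) (vl_abs v)" and ?q2 = "inf (neg_part z) (vl_abs v)"
  have vu: "vl_disj v u" using uv vl_disj_sym by blast
  have e: "u - frag_part z u = (?x - z) - (v - frag_part z v)"
    using frag_part_add[OF uv z] by (simp add: algebra_simps)
  have xz: "vl_disj (?x - z) z" using z by (simp add: fragments_def vl_disj_sym)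
  have key: "vl_disj w (u - frag_part z u)" if w0: "0 \<le> w" and wz: "w \<le> vl_abs z" and wu: "w \<le> vl_abs u" for w
  proof -
    have 1: "vl_disj w (?x - z)" using vl_disj_mono_nonneg[OF xz w0 wz] vl_disj_sym by blast
    have wv: "vl_disj w v" using vl_disj_mono_nonneg[OF vu w0 wu] vl_disj_sym by blast
    have "vl_disj w ?p2" by (rule vl_disj_mono_nonneg[OF wv]) (simp_all add: pos_part_nonneg vl_abs_nonneg)
    moreover have "vl_disj w ?q2" by (rule vl_disj_mono_nonneg[OF wv]) (simp_all add: neg_part_nonneg vl_abs_nonneg)
    ultimately have "vl_disj w (frag_part z v)" unfolding frag_part_def by (rule vl_disj_diff)
    then have "vl_disj w (v - frag_part z v)" using wv vl_disj_diff by blast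
    with 1 have "vl_disj w ((?x - z) - (v - frag_part z v))" by (rule vl_disj_diff)
    then show ?thesis by (simp only: e)
  qed
  have "vl_disj ?p1 (u - frag_part z u)"
    by (rule key) (use pos_part_le_vl_abs[of z] pos_part_nonneg[of z] vl_abs_nonneg[of u] in \<open>auto intro: le_infI1\<close>)
  moreover have "vl_disj ?q1 (u - frag_part z u)"
    by (rule key) (use neg_part_le_vl_abs[of z] neg_part_nonneg[of z] vl_abs_nonneg[of u] in \<open>auto intro: le_infI1\<close>)
  ultimately have "vl_disj (u - frag_part z u) (frag_part z u)"
    unfolding frag_part_def by (meson vl_disj_diff vl_disj_sym)
  then show ?thesis by (simp add: fragments_def vl_disj_sym)
qed

lemma fragments_add_split:
  fixes u v z :: "'a::{ordered_ab_group_add,lattice}"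
  assumes uv: "vl_disj u v" and z: "z \<in> fragments (u + v)"
  shows "\<exists>a\<in>fragments u. \<exists>b\<in>fragments v. z = a + b"
proof -
  have vu: "vl_disj v u" using uv vl_disj_sym by blast
  have z': "z \<in> fragments (v + u)" using z by (simp add: add.commute)
  have "frag_part z u \<in> fragments u" by (rule frag_part_fragment[OF uv z])
  moreover have "frag_part z v \<in> fragments v" by (rule frag_part_fragment[OF vu z'])
  moreover have "z = frag_part z u + frag_part z v" using frag_part_add[OF uv z] by simp
  ultimately show ?thesis by blast
qed

lemma image_diff_fragments: "(\<lambda>y. e - y) ` fragments e = fragments (e::'a::{ordered_ab_group_add,lattice})"
proof (intro set_eqI iffI)
  fix f assume "f \<in> (\<lambda>y. e - y) ` fragments e"
  then show "f \<in> fragments e" using fragments_diff by blast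
next
  fix f assume "f \<in> fragments e"
  then have "e - f \<in> fragments e" "f = e - (e - f)" by (simp_all add: fragments_diff)
  then show "f \<in> (\<lambda>y. e - y) ` fragments e" by blast
qed

lemma is_lub_of_cSup:
  fixes D :: "'a::conditionally_complete_lattice set"
  shows "D \<noteq> {} \<Longrightarrow> bdd_above D \<Longrightarrow> is_lub_of D (Sup D)"
  unfolding is_lub_of_def by (auto intro: cSup_upper cSup_least)

lemma cSup_eq_of_is_lub_of:
  fixes D :: "'a::conditionally_complete_lattice set"
  shows "D \<noteq> {} \<Longrightarrow> is_lub_of D s \<Longrightarrow> Sup D = s"
proof -
  assume a: "D \<noteq> {}" "is_lub_of D s"
  then have "bdd_above D" unfolding is_lub_of_def bdd_above_def by blast
  then show ?thesis using is_lub_of_cSup[OF a(1)] a(2) is_lub_of_unique by blast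
qed

lemma inf_cSup:
  fixes D :: "'a::{ordered_ab_group_add,conditionally_complete_lattice} set"
  assumes "D \<noteq> {}" "bdd_above D"
  shows "inf a (Sup D) = Sup (inf a ` D)"
  using cSup_eq_of_is_lub_of[OF _ is_lub_of_inf[OF is_lub_of_cSup[OF assms] assms(1)]] assms(1) by simp

lemma diff_cSup:
  fixes D :: "'a::{ordered_ab_group_add,conditionally_complete_lattice} set"
  assumes "D \<noteq> {}" "bdd_above D"
  shows "c - Sup D = Inf ((\<lambda>x. c - x) ` D)"
proof (rule order.antisym)
  show "c - Sup D \<le> Inf ((\<lambda>x. c - x) ` D)"
    using assms by (auto intro!: cInf_greatest diff_left_mono cSup_upper)
  have b: "bdd_below ((\<lambda>x. c - x) ` D)" using assms(2)
    unfolding bdd_below_def bdd_above_def by (auto intro: diff_left_mono)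
  have "\<forall>x\<in>D. x \<le> c - Inf ((\<lambda>x. c - x) ` D)"
  proof
    fix x assume "x \<in> D"
    then have "Inf ((\<lambda>x. c - x) ` D) \<le> c - x" using b by (auto intro: cInf_lower)
    then show "x \<le> c - Inf ((\<lambda>x. c - x) ` D)" by (simp add: le_diff_eq diff_le_eq add.commute)
  qed
  then have "Sup D \<le> c - Inf ((\<lambda>x. c - x) ` D)" using assms by (auto intro: cSup_least)
  then show "Inf ((\<lambda>x. c - x) ` D) \<le> c - Sup D" by (simp add: le_diff_eq diff_le_eq add.commute)
qed

lemma diff_cInf:
  fixes D :: "'a::{ordered_ab_group_add,conditionally_complete_lattice} set"
  assumes "D \<noteq> {}" "bdd_below D"
  shows "c - Inf D = Sup ((\<lambda>x. c - x) ` D)"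
proof (rule order.antisym)
  show "Sup ((\<lambda>x. c - x) ` D) \<le> c - Inf D"
    using assms by (auto intro!: cSup_least diff_left_mono cInf_lower)
  have b: "bdd_above ((\<lambda>x. c - x) ` D)" using assms(2)
    unfolding bdd_below_def bdd_above_def by (auto intro: diff_left_mono)
  have "\<forall>x\<in>D. c - Sup ((\<lambda>x. c - x) ` D) \<le> x"
  proof
    fix x assume "x \<in> D"
    then have "c - x \<le> Sup ((\<lambda>x. c - x) ` D)" using b by (auto intro: cSup_upper)
    then show "c - Sup ((\<lambda>x. c - x) ` D) \<le> x" by (simp add: le_diff_eq diff_le_eq add.commute)
  qed
  then have "c - Sup ((\<lambda>x. c - x) ` D) \<le> Inf D" using assms by (auto intro: cInf_greatest)
  then show "c - Inf D \<le> Sup ((\<lambda>x. c - x) ` D)" by (simp add: le_diff_eq diff_le_eq add.commute)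
qed

lemma cInf_add_set:
  fixes f g :: "'i \<Rightarrow> 'a::{ordered_ab_group_add,conditionally_complete_lattice}"
  assumes "A \<noteq> {}" "B \<noteq> {}" "bdd_below (f ` A)" "bdd_below (g ` B)"
  shows "Inf {f a + g b |a b. a \<in> A \<and> b \<in> B} = Inf (f ` A) + Inf (g ` B)"
proof (rule order.antisym)
  let ?S = "{f a + g b |a b. a \<in> A \<and> b \<in> B}"
  show "Inf (f ` A) + Inf (g ` B) \<le> Inf ?S"
    using assms by (auto intro!: cInf_greatest add_mono cInf_lower)
  have bS: "bdd_below ?S"
  proof -
    obtain l1 where "\<forall>a\<in>A. l1 \<le> f a" using assms(3) unfolding bdd_below_def by auto
    moreover obtain l2 where "\<forall>b\<in>B. l2 \<le> g b" using assms(4) unfolding bdd_below_def by auto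
    ultimately show ?thesis unfolding bdd_below_def by (auto intro!: exI[of _ "l1 + l2"] add_mono)
  qed
  have "\<forall>b\<in>B. Inf ?S - Inf (f ` A) \<le> g b"
  proof
    fix b assume b: "b \<in> B"
    have "\<forall>a\<in>A. Inf ?S - g b \<le> f a"
    proof
      fix a assume "a \<in> A"
      then have "f a + g b \<in> ?S" using b by blast
      then have "Inf ?S \<le> f a + g b" using bS by (rule cInf_lower)
      then show "Inf ?S - g b \<le> f a" by (simp add: diff_le_eq)
    qed
    then have "Inf ?S - g b \<le> Inf (f ` A)" using assms(1) by (auto intro: cInf_greatest)
    then show "Inf ?S - Inf (f ` A) \<le> g b" by (simp add: diff_le_eq le_diff_eq add.commute)
  qed
  then have "Inf ?S - Inf (f ` A) \<le> Inf (g ` B)" using assms(2) by (auto intro: cInf_greatest)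
  then show "Inf ?S \<le> Inf (f ` A) + Inf (g ` B)" by (simp add: diff_le_eq add.commute)
qed

lemma cSup_add_set:
  fixes f g :: "'i \<Rightarrow> 'a::{ordered_ab_group_add,conditionally_complete_lattice}"
  assumes "A \<noteq> {}" "B \<noteq> {}" "bdd_above (f ` A)" "bdd_above (g ` B)"
  shows "Sup {f a + g b |a b. a \<in> A \<and> b \<in> B} = Sup (f ` A) + Sup (g ` B)"
proof (rule order.antisym)
  let ?S = "{f a + g b |a b. a \<in> A \<and> b \<in> B}"
  show "Sup ?S \<le> Sup (f ` A) + Sup (g ` B)"
    using assms by (auto intro!: cSup_least add_mono cSup_upper)
  have bS: "bdd_above ?S"
  proof -
    obtain l1 where "\<forall>a\<in>A. f a \<le> l1" using assms(3) unfolding bdd_above_def by auto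
    moreover obtain l2 where "\<forall>b\<in>B. g b \<le> l2" using assms(4) unfolding bdd_above_def by auto
    ultimately show ?thesis unfolding bdd_above_def by (auto intro!: exI[of _ "l1 + l2"] add_mono)
  qed
  have "\<forall>b\<in>B. g b \<le> Sup ?S - Sup (f ` A)"
  proof
    fix b assume b: "b \<in> B"
    have "\<forall>a\<in>A. f a \<le> Sup ?S - g b"
    proof
      fix a assume "a \<in> A"
      then have "f a + g b \<in> ?S" using b by blast
      then have "f a + g b \<le> Sup ?S" using bS by (rule cSup_upper)
      then show "f a \<le> Sup ?S - g b" by (simp add: le_diff_eq)
    qed
    then have "Sup (f ` A) \<le> Sup ?S - g b" using assms(1) by (auto intro: cSup_least)
    then show "g b \<le> Sup ?S - Sup (f ` A)" by (simp add: diff_le_eq le_diff_eq add.commute)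
  qed
  then have "Sup (g ` B) \<le> Sup ?S - Sup (f ` A)" using assms(2) by (auto intro: cSup_least)
  then show "Sup (f ` A) + Sup (g ` B) \<le> Sup ?S" by (simp add: le_diff_eq add.commute)
qed

lemma cSup_add_directed:
  fixes f g :: "'i \<Rightarrow> 'a::{ordered_ab_group_add,conditionally_complete_lattice}"
  assumes "I \<noteq> {}" "bdd_above (f ` I)" "bdd_above (g ` I)"
    and dir: "\<And>i j. i \<in> I \<Longrightarrow> j \<in> I \<Longrightarrow> \<exists>k\<in>I. f i \<le> f k \<and> g j \<le> g k"
  shows "Sup ((\<lambda>i. f i + g i) ` I) = Sup (f ` I) + Sup (g ` I)"
proof (rule order.antisym)
  show "Sup ((\<lambda>i. f i + g i) ` I) \<le> Sup (f ` I) + Sup (g ` I)"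
    using assms by (auto intro!: cSup_least add_mono cSup_upper)
  have bS: "bdd_above ((\<lambda>i. f i + g i) ` I)"
  proof -
    obtain l1 where "\<forall>i\<in>I. f i \<le> l1" using assms(2) unfolding bdd_above_def by auto
    moreover obtain l2 where "\<forall>i\<in>I. g i \<le> l2" using assms(3) unfolding bdd_above_def by auto
    ultimately show ?thesis unfolding bdd_above_def by (auto intro!: exI[of _ "l1 + l2"] add_mono)
  qed
  let ?S = "Sup ((\<lambda>i. f i + g i) ` I)"
  have "\<forall>j\<in>I. g j \<le> ?S - Sup (f ` I)"
  proof
    fix j assume j: "j \<in> I"
    have "\<forall>i\<in>I. f i \<le> ?S - g j"
    proof
      fix i assume i: "i \<in> I"
      obtain k where k: "k \<in> I" "f i \<le> f k" "g j \<le> g k" using dir[OF i j] by blast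
      have "f i + g j \<le> f k + g k" using k by (simp add: add_mono)
      also have "\<dots> \<le> ?S" using bS k(1) by (auto intro: cSup_upper)
      finally show "f i \<le> ?S - g j" by (simp add: le_diff_eq)
    qed
    then have "Sup (f ` I) \<le> ?S - g j" using assms(1) by (auto intro: cSup_least)
    then show "g j \<le> ?S - Sup (f ` I)" by (simp add: diff_le_eq le_diff_eq add.commute)
  qed
  then have "Sup (g ` I) \<le> ?S - Sup (f ` I)" using assms(1) by (auto intro: cSup_least)
  then show "Sup (f ` I) + Sup (g ` I) \<le> ?S" by (simp add: le_diff_eq add.commute)
qed

lemma nsmul_bounded_eq_0:
  fixes g y :: "'a::{ordered_ab_group_add,conditionally_complete_lattice}"
  assumes "0 \<le> g" "\<And>n. nsmul n g \<le> y"
  shows "g = 0"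
proof -
  let ?D = "range (\<lambda>n. nsmul n g)"
  have bd: "bdd_above ?D" using assms(2) by (auto simp: bdd_above_def)
  have "\<forall>x\<in>?D. x \<le> Sup ?D - g"
  proof
    fix x assume "x \<in> ?D"
    then obtain n where n: "x = nsmul n g" by auto
    have "nsmul (Suc n) g \<le> Sup ?D" by (rule cSup_upper[OF rangeI bd])
    then show "x \<le> Sup ?D - g" using n by (simp add: le_diff_eq add.commute)
  qed
  then have "Sup ?D \<le> Sup ?D - g" by (intro cSup_least) blast+
  then have "g \<le> 0" by (simp add: le_diff_eq)
  then show ?thesis using assms(1) by simp
qed

section \<open>Bands and band projections\<close>

lemma scaleR_sup_nonneg:
  fixes a b :: "'a::{ordered_real_vector,lattice}"
  assumes "0 \<le> c"
  shows "c *\<^sub>R sup a b = sup (c *\<^sub>R a) (c *\<^sub>R b)"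
proof (cases "c = 0")
  case True then show ?thesis by simp
next
  case False
  then have cp: "0 < c" using assms by simp
  show ?thesis
  proof (rule order.antisym)
    show "sup (c *\<^sub>R a) (c *\<^sub>R b) \<le> c *\<^sub>R sup a b"
      using assms by (intro le_supI scaleR_left_mono) simp_all
    have "a \<le> inverse c *\<^sub>R sup (c *\<^sub>R a) (c *\<^sub>R b)"
    proof -
      have "c *\<^sub>R a \<le> sup (c *\<^sub>R a) (c *\<^sub>R b)" by simp
      then have "inverse c *\<^sub>R (c *\<^sub>R a) \<le> inverse c *\<^sub>R sup (c *\<^sub>R a) (c *\<^sub>R b)"
        using cp by (intro scaleR_left_mono) simp_all
      then show ?thesis using cp by simp
    qed
    moreover have "b \<le> inverse c *\<^sub>R sup (c *\<^sub>R a) (c *\<^sub>R b)"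
    proof -
      have "c *\<^sub>R b \<le> sup (c *\<^sub>R a) (c *\<^sub>R b)" by simp
      then have "inverse c *\<^sub>R (c *\<^sub>R b) \<le> inverse c *\<^sub>R sup (c *\<^sub>R a) (c *\<^sub>R b)"
        using cp by (intro scaleR_left_mono) simp_all
      then show ?thesis using cp by simp
    qed
    ultimately have "sup a b \<le> inverse c *\<^sub>R sup (c *\<^sub>R a) (c *\<^sub>R b)" by simp
    then have "c *\<^sub>R sup a b \<le> c *\<^sub>R (inverse c *\<^sub>R sup (c *\<^sub>R a) (c *\<^sub>R b))"
      using cp by (intro scaleR_left_mono) simp_all
    then show "c *\<^sub>R sup a b \<le> sup (c *\<^sub>R a) (c *\<^sub>R b)" using cp by simp
  qed
qed

lemma vl_abs_scaleR_nonneg: "0 \<le> c \<Longrightarrow> vl_abs (c *\<^sub>R x) = c *\<^sub>R vl_abs (x::'a::{ordered_real_vector,lattice})"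
  unfolding vl_abs_def by (simp add: scaleR_sup_nonneg)

lemma vl_abs_scaleR: "vl_abs (c *\<^sub>R x) = \<bar>c\<bar> *\<^sub>R vl_abs (x::'a::{ordered_real_vector,lattice})"
proof (cases "0 \<le> c")
  case True
  then show ?thesis by (simp add: vl_abs_scaleR_nonneg)
next
  case False
  have "vl_abs (c *\<^sub>R x) = vl_abs ((- c) *\<^sub>R x)" using vl_abs_uminus[of "c *\<^sub>R x"] by simp
  also have "\<dots> = (- c) *\<^sub>R vl_abs x" by (rule vl_abs_scaleR_nonneg) (use False in simp)
  finally have X: "vl_abs (c *\<^sub>R x) = (- c) *\<^sub>R vl_abs x" .
  have "\<bar>c\<bar> = - c" using False by simp
  then show ?thesis using X by simp
qed

lemma vl_disj_scaleR: "vl_disj x y \<Longrightarrow> vl_disj x (c *\<^sub>R (y::'a::{ordered_real_vector,lattice}))"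
proof -
  assume d: "vl_disj x y"
  obtain N :: nat where N: "\<bar>c\<bar> \<le> real N" using real_arch_simple by blast
  have "vl_disj x (vl_abs y)" by (rule vl_disj_mono[OF d]) (simp add: vl_abs_of_nonneg[OF vl_abs_nonneg])
  then have d2: "vl_disj x (nsmul N (vl_abs y))" by (rule vl_disj_nsmul)
  have "vl_abs (c *\<^sub>R y) = \<bar>c\<bar> *\<^sub>R vl_abs y" by (rule vl_abs_scaleR)
  also have "\<dots> \<le> real N *\<^sub>R vl_abs y" using N vl_abs_nonneg by (rule scaleR_right_mono)
  also have "\<dots> = vl_abs (nsmul N (vl_abs y))"
    using vl_abs_of_nonneg[OF nsmul_nonneg[OF vl_abs_nonneg], of N y] by (simp add: nsmul_eq_scaleR)
  finally show ?thesis by (rule vl_disj_mono[OF d2])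
qed

lemma vl_band_dcompl:
  fixes X :: "'a::{ordered_real_vector,conditionally_complete_lattice} set"
  shows "vl_band (vl_dcompl X)"
  unfolding vl_band_def vl_ideal_def
proof (intro conjI allI ballI impI)
  show "0 \<in> vl_dcompl X" by (simp add: vl_dcompl_def)
  show "x + y \<in> vl_dcompl X" if "x \<in> vl_dcompl X" "y \<in> vl_dcompl X" for x y
    using that by (simp add: vl_dcompl_def vl_disj_add)
  show "c *\<^sub>R x \<in> vl_dcompl X" if "x \<in> vl_dcompl X" for c x
    using that by (simp add: vl_dcompl_def vl_disj_scaleR)
  show "x \<in> vl_dcompl X" if "y \<in> vl_dcompl X \<and> vl_abs x \<le> vl_abs y" for x y
    using that vl_disj_mono by (auto simp: vl_dcompl_def)
  fix D s assume h: "D \<subseteq> vl_dcompl X \<and> is_lub_of D s"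
  show "s \<in> vl_dcompl X"
  proof (cases "D = {}")
    case True
    then have "s \<le> - (vl_abs s + vl_abs s)" using h by (simp add: is_lub_of_def)
    moreover have "- vl_abs s \<le> s" using vl_abs_ge(2)[of s] by (simp add: minus_le_iff)
    ultimately have "- vl_abs s \<le> - (vl_abs s + vl_abs s)" by (metis order_trans)
    then have "vl_abs s \<le> 0" by simp
    then have "s = 0" using vl_abs_nonneg[of s] vl_abs_eq_0_iff[of s] by simp
    then show ?thesis by (simp add: vl_dcompl_def)
  next
    case False
    then obtain d0 where "d0 \<in> D" by blast
    have "vl_disj x s" if "x \<in> X" for x
      by (rule vl_disj_is_lub_of[of D s d0]) (use h \<open>d0 \<in> D\<close> that in \<open>auto simp: vl_dcompl_def\<close>)
    then show ?thesis by (simp add: vl_dcompl_def)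
  qed
qed

lemma band_decomp_unique:
  fixes B :: "'a::{ordered_real_vector,lattice} set"
  assumes "vl_ideal B" "b1 \<in> B" "b2 \<in> B" "c1 \<in> vl_dcompl B" "c2 \<in> vl_dcompl B" "b1 + c1 = b2 + c2"
  shows "b1 = b2"
proof -
  have "(-1) *\<^sub>R b2 \<in> B" using assms(1,3) unfolding vl_ideal_def by blast
  then have "- b2 \<in> B" by simp
  then have "b1 + - b2 \<in> B" using assms(1,2) unfolding vl_ideal_def by blast
  then have m: "b1 - b2 \<in> B" by simp
  have "c2 - c1 \<in> vl_dcompl B" using assms(4,5) by (simp add: vl_dcompl_def vl_disj_diff)
  moreover have "c2 - c1 = b1 - b2" using assms(6) by (simp add: algebra_simps)
  ultimately have "vl_disj (b1 - b2) (b1 - b2)" using m by (simp add: vl_dcompl_def)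
  then have "b1 - b2 = 0" by (rule vl_disj_self)
  then show ?thesis by simp
qed

lemma band_projection_add:
  fixes \<rho> :: "'a::{ordered_real_vector,lattice} \<Rightarrow> 'a"
  assumes "band_projection \<rho>"
  shows "\<rho> (x + y) = \<rho> x + \<rho> y"
proof -
  obtain B where B: "vl_band B" "\<And>x. \<rho> x \<in> B \<and> x - \<rho> x \<in> vl_dcompl B"
    using assms unfolding band_projection_def by blast
  have I: "vl_ideal B" using B(1) by (simp add: vl_band_def)
  have "\<rho> x + \<rho> y \<in> B" using I B(2) by (simp add: vl_ideal_def)
  moreover have "(x - \<rho> x) + (y - \<rho> y) \<in> vl_dcompl B" using B(2)[of x] B(2)[of y]
    by (simp add: vl_dcompl_def vl_disj_add)
  moreover have "\<rho> (x + y) + ((x + y) - \<rho> (x + y)) = (\<rho> x + \<rho> y) + ((x - \<rho> x) + (y - \<rho> y))"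
    by (simp add: algebra_simps)
  ultimately show ?thesis using band_decomp_unique[OF I] B(2) by blast
qed

lemma band_projection_0: "band_projection \<rho> \<Longrightarrow> \<rho> 0 = (0::'a::{ordered_real_vector,lattice})"
  using band_projection_add[of \<rho> 0 0] by simp

lemma band_projection_diff: "band_projection \<rho> \<Longrightarrow> \<rho> (x - y) = \<rho> x - \<rho> (y::'a::{ordered_real_vector,lattice})"
  using band_projection_add[of \<rho> "x - y" y] by (simp add: algebra_simps)

lemma band_projection_nsmul: "band_projection \<rho> \<Longrightarrow> \<rho> (nsmul n x) = nsmul n (\<rho> (x::'a::{ordered_real_vector,lattice}))"
  by (induction n) (simp_all add: band_projection_0 band_projection_add)

lemma nonneg_of_disj_add:
  fixes x b c :: "'a::{ordered_ab_group_add,lattice}"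
  assumes "0 \<le> x" "vl_disj b c" "x = b + c"
  shows "0 \<le> b"
proof -
  have d: "inf (vl_abs b) (vl_abs c) = 0" using assms(2) by (simp add: vl_disj_def)
  have "inf (neg_part b) (vl_abs c) = 0"
    by (rule inf_eq_0_of_le_vl_abs[OF d neg_part_nonneg neg_part_le_vl_abs vl_abs_nonneg order_refl])
  moreover have "inf (neg_part b) (pos_part b) = 0" using inf_pos_part_neg_part by (metis inf_commute)
  ultimately have z: "inf (neg_part b) (pos_part b + vl_abs c) = 0"
    by (intro inf_add_eq_0 neg_part_nonneg pos_part_nonneg vl_abs_nonneg)
  have "0 \<le> pos_part b - neg_part b + c" using assms(1,3) pos_part_diff_neg_part[of b] by simp
  then have "neg_part b \<le> pos_part b + c" by (simp add: algebra_simps)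
  also have "\<dots> \<le> pos_part b + vl_abs c" using vl_abs_ge(1) by (rule add_left_mono)
  finally have "neg_part b = 0" using z by (simp add: inf.absorb1)
  then show ?thesis using pos_part_diff_neg_part[of b] pos_part_nonneg[of b] by simp
qed

lemma band_projection_nonneg:
  fixes \<rho> :: "'a::{ordered_real_vector,lattice} \<Rightarrow> 'a"
  assumes "band_projection \<rho>" "0 \<le> x"
  shows "0 \<le> \<rho> x" "\<rho> x \<le> x"
proof -
  obtain B where B: "vl_band B" "\<And>x. \<rho> x \<in> B \<and> x - \<rho> x \<in> vl_dcompl B"
    using assms unfolding band_projection_def by blast
  have d: "vl_disj (\<rho> x) (x - \<rho> x)" using B(2)[of x] by (simp add: vl_dcompl_def)
  show "0 \<le> \<rho> x" by (rule nonneg_of_disj_add[OF assms(2) d]) simp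
  have "0 \<le> x - \<rho> x" by (rule nonneg_of_disj_add[OF assms(2) d[unfolded vl_disj_sym[of "\<rho> x"]]]) simp
  then show "\<rho> x \<le> x" by simp
qed

lemma band_projection_le_pos_part:
  fixes \<rho> :: "'a::{ordered_real_vector,lattice} \<Rightarrow> 'a"
  assumes "band_projection \<rho>"
  shows "\<rho> x \<le> pos_part x"
proof -
  have "\<rho> x = \<rho> (pos_part x) - \<rho> (neg_part x)" using band_projection_diff[OF assms] pos_part_diff_neg_part[of x] by metis
  also have "\<dots> \<le> \<rho> (pos_part x)" using band_projection_nonneg(1)[OF assms neg_part_nonneg] by simp
  also have "\<dots> \<le> pos_part x" by (rule band_projection_nonneg(2)[OF assms pos_part_nonneg])
  finally show ?thesis .
qed

lemma band_projection_id: "band_projection (\<lambda>x::'a::{ordered_real_vector,conditionally_complete_lattice}. x)"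
proof -
  have "vl_dcompl {0::'a} = UNIV" by (simp add: vl_dcompl_def)
  then have "vl_band (UNIV::'a set)" using vl_band_dcompl[of "{0::'a}"] by simp
  moreover have "(0::'a) \<in> vl_dcompl UNIV" by (simp add: vl_dcompl_def)
  ultimately show ?thesis unfolding band_projection_def by (intro exI[of _ UNIV]) simp
qed

section \<open>The band generated by a positive element\<close>

text \<open>For p \<ge> 0, band_part v p is the projection of p onto the band generated by v, which exists
  because F is Dedekind complete; band_proj extends it to all of F via positive and negative parts.\<close>

definition band_part :: "'a::{ordered_real_vector,conditionally_complete_lattice} \<Rightarrow> 'a \<Rightarrow> 'a" where
  "band_part v p = Sup (range (\<lambda>k. inf p (nsmul k v)))"

lemma band_part_bdd: "bdd_above (range (\<lambda>k. inf (p::'a::{ordered_real_vector,conditionally_complete_lattice}) (nsmul k v)))"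
  by (rule bdd_aboveI[of _ p]) auto

lemma band_part_upper: "inf p (nsmul k v) \<le> band_part v p"
  unfolding band_part_def by (rule cSup_upper[OF rangeI band_part_bdd])

lemma band_part_least: "(\<And>k. inf p (nsmul k v) \<le> u) \<Longrightarrow> band_part v p \<le> u"
  unfolding band_part_def by (rule cSup_least) auto

lemma band_part_nonneg: "0 \<le> p \<Longrightarrow> 0 \<le> band_part v p"
  using band_part_upper[of p 0 v] by (simp add: inf.absorb2)

lemma band_part_le: "band_part v p \<le> p"
  unfolding band_part_def by (rule cSup_least) auto

lemma band_part_mono: "p \<le> p' \<Longrightarrow> band_part v p \<le> band_part v p'"
  by (rule band_part_least) (meson band_part_upper inf_mono order_refl order_trans)

lemma vl_disj_band_part_diff:
  assumes p0: "0 \<le> p" and v0: "0 \<le> v"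
  shows "vl_disj v (p - band_part v p)"
proof -
  let ?q = "band_part v p"
  let ?d = "inf (p - ?q) v"
  have pq: "0 \<le> p - ?q" using band_part_le by simp
  have d0: "0 \<le> ?d" using pq v0 by simp
  have "inf p (nsmul k v) \<le> ?q - ?d" for k
  proof -
    have "inf p (nsmul k v) + ?d \<le> p"
    proof -
      have "?d \<le> p - ?q" by simp
      also have "\<dots> \<le> p - inf p (nsmul k v)" using band_part_upper by (rule diff_left_mono)
      finally have "?d + inf p (nsmul k v) \<le> p" by (simp only: le_diff_eq)
      then show ?thesis by (simp only: add.commute)
    qed
    moreover have "inf p (nsmul k v) + ?d \<le> nsmul (Suc k) v"
      using add_mono[OF inf_le2[of p "nsmul k v"] inf_le2[of "p - ?q" v]] by (simp add: add.commute)
    ultimately have "inf p (nsmul k v) + ?d \<le> inf p (nsmul (Suc k) v)" by simp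
    also have "\<dots> \<le> ?q" by (rule band_part_upper)
    finally show ?thesis by (simp only: le_diff_eq)
  qed
  then have "?q \<le> ?q - ?d" by (rule band_part_least)
  then have "?q + ?d \<le> ?q" by (simp only: le_diff_eq)
  then have "?d \<le> 0" by (simp only: add_le_same_cancel1)
  then have "?d = 0" using d0 by (rule order.antisym)
  then show ?thesis unfolding vl_disj_def using vl_abs_of_nonneg[OF v0] vl_abs_of_nonneg[OF pq] by (simp add: inf_commute)
qed

lemma vl_disj_band_part:
  assumes p0: "0 \<le> p" and v0: "0 \<le> v" and d: "vl_disj v y"
  shows "vl_disj y (band_part v p)"
proof -
  have yv: "inf (vl_abs y) v = 0" using d vl_abs_of_nonneg[OF v0] by (simp add: vl_disj_def inf_commute)
  have z: "inf (vl_abs y) (inf p (nsmul k v)) = 0" for k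
  proof -
    have "inf (vl_abs y) (nsmul k v) = 0" by (rule inf_nsmul_eq_0[OF vl_abs_nonneg v0 yv])
    moreover have "inf (vl_abs y) (inf p (nsmul k v)) \<le> inf (vl_abs y) (nsmul k v)" by (simp add: le_infI2)
    moreover have "0 \<le> inf (vl_abs y) (inf p (nsmul k v))" using p0 v0 nsmul_nonneg[OF v0] vl_abs_nonneg by simp
    ultimately show ?thesis by simp
  qed
  have "inf (vl_abs y) (band_part v p) = Sup (inf (vl_abs y) ` range (\<lambda>k. inf p (nsmul k v)))"
    unfolding band_part_def by (rule inf_cSup[OF _ band_part_bdd]) simp
  also have "inf (vl_abs y) ` range (\<lambda>k. inf p (nsmul k v)) = range (\<lambda>k. 0)" using z by (simp add: image_image)
  finally have "inf (vl_abs y) (band_part v p) = 0" by simp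
  then show ?thesis unfolding vl_disj_def using vl_abs_of_nonneg[OF band_part_nonneg[OF p0]] by simp
qed

lemma band_part_self: "0 \<le> v \<Longrightarrow> band_part v v = v"
proof -
  assume v0: "0 \<le> v"
  have "inf v (nsmul 1 v) \<le> band_part v v" by (rule band_part_upper)
  then have "v \<le> band_part v v" by simp
  then show ?thesis using band_part_le[of v v] by simp
qed

lemma band_part_eq_0: "0 \<le> p \<Longrightarrow> 0 \<le> v \<Longrightarrow> inf p v = 0 \<Longrightarrow> band_part v p = 0"
proof -
  assume a: "0 \<le> p" "0 \<le> v" "inf p v = 0"
  have "band_part v p \<le> 0" by (rule band_part_least) (simp add: inf_nsmul_eq_0[OF a])
  then show ?thesis using band_part_nonneg[OF a(1), of v] by (rule order.antisym)
qed

lemma band_part_mono_generator: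
  assumes "0 \<le> v'" "v \<le> nsmul N v'"
  shows "band_part v p \<le> band_part v' p"
proof (rule band_part_least)
  fix k
  have "nsmul k v \<le> nsmul k (nsmul N v')" using assms(2) by (rule nsmul_mono)
  then have "inf p (nsmul k v) \<le> inf p (nsmul (k * N) v')" by (simp add: nsmul_nsmul le_infI2)
  also have "\<dots> \<le> band_part v' p" by (rule band_part_upper)
  finally show "inf p (nsmul k v) \<le> band_part v' p" .
qed

lemma band_part_le_scaleR_generator:
  assumes "0 \<le> w" "0 < \<epsilon>" "v \<le> w"
  shows "band_part v p \<le> band_part (\<epsilon> *\<^sub>R w) p"
proof -
  obtain N :: nat where N: "1 / \<epsilon> \<le> real N" using real_arch_simple by blast
  have "v \<le> 1 *\<^sub>R w" using assms(3) by simp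
  also have "\<dots> \<le> (real N * \<epsilon>) *\<^sub>R w"
    using N assms(1,2) by (intro scaleR_right_mono) (simp_all add: field_simps)
  also have "\<dots> = nsmul N (\<epsilon> *\<^sub>R w)" by (simp add: nsmul_eq_scaleR)
  finally show ?thesis using assms(1,2) by (intro band_part_mono_generator) (simp_all add: scaleR_nonneg_nonneg)
qed

definition band_proj :: "'a::{ordered_real_vector,conditionally_complete_lattice} \<Rightarrow> 'a \<Rightarrow> 'a" where
  "band_proj v x = band_part v (pos_part x) - band_part v (neg_part x)"

lemma band_projection_diff_band_proj:
  assumes v0: "0 \<le> v"
  shows "band_projection (\<lambda>x. x - band_proj v x)"
  unfolding band_projection_def
proof (intro exI[of _ "vl_dcompl {v}"] conjI allI)
  show "vl_band (vl_dcompl {v})" by (rule vl_band_dcompl)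
  fix x
  have "x - band_proj v x = (pos_part x - band_part v (pos_part x)) - (neg_part x - band_part v (neg_part x))"
    using pos_part_diff_neg_part[of x] unfolding band_proj_def by (simp add: algebra_simps)
  moreover have "vl_disj v (pos_part x - band_part v (pos_part x))" by (rule vl_disj_band_part_diff[OF pos_part_nonneg v0])
  moreover have "vl_disj v (neg_part x - band_part v (neg_part x))" by (rule vl_disj_band_part_diff[OF neg_part_nonneg v0])
  ultimately show "x - band_proj v x \<in> vl_dcompl {v}" by (simp add: vl_dcompl_def vl_disj_diff)
  have "vl_disj y (band_proj v x)" if "y \<in> vl_dcompl {v}" for y
  proof -
    have "vl_disj v y" using that by (simp add: vl_dcompl_def)
    then show ?thesis unfolding band_proj_def using vl_disj_band_part[OF pos_part_nonneg v0] vl_disj_band_part[OF neg_part_nonneg v0] vl_disj_diff by blast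
  qed
  then show "x - (x - band_proj v x) \<in> vl_dcompl (vl_dcompl {v})" by (simp add: vl_dcompl_def)
qed

lemma band_proj_add: "0 \<le> v \<Longrightarrow> band_proj v (x + y) = band_proj v x + band_proj v y"
  using band_projection_add[OF band_projection_diff_band_proj, of v x y] by (simp add: algebra_simps)

lemma band_proj_diff: "0 \<le> v \<Longrightarrow> band_proj v (x - y) = band_proj v x - band_proj v y"
  using band_proj_add[of v "x - y" y] by (simp add: algebra_simps)

lemma band_proj_nsmul: "0 \<le> v \<Longrightarrow> band_proj v (nsmul n x) = nsmul n (band_proj v x)"
  by (induction n) (simp_all add: band_proj_add, simp add: band_proj_def pos_part_def neg_part_def band_part_eq_0)

lemma band_proj_nonneg_eq: "0 \<le> y \<Longrightarrow> band_proj v y = band_part v y"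
proof -
  assume y: "0 \<le> y"
  have "pos_part y = y" using y by (simp add: pos_part_def sup.absorb1)
  moreover have "neg_part y = 0" using y by (simp add: neg_part_def sup.absorb2)
  moreover have "band_part v 0 = 0" using band_part_le[of v 0] band_part_nonneg[of 0 v] by simp
  ultimately show ?thesis by (simp add: band_proj_def)
qed

lemma band_proj_pos_part: "band_proj (pos_part w) w = pos_part w"
proof -
  have "band_part (pos_part w) (pos_part w) = pos_part w" by (rule band_part_self[OF pos_part_nonneg])
  moreover have "band_part (pos_part w) (neg_part w) = 0" by (rule band_part_eq_0[OF neg_part_nonneg pos_part_nonneg]) (metis inf_pos_part_neg_part inf_commute)
  ultimately show ?thesis by (simp add: band_proj_def)
qed

lemma band_proj_le: "band_proj v x \<le> band_part v (pos_part x)"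
  unfolding band_proj_def using band_part_nonneg[OF neg_part_nonneg] by simp

lemma band_proj_cut:
  fixes y b :: "'a::{ordered_real_vector,conditionally_complete_lattice}"
  assumes b0: "0 \<le> b" and y0: "0 \<le> y"
  shows "y - band_proj (pos_part (y - b)) y \<le> b" and "band_proj (pos_part (y - b)) b \<le> y"
proof -
  let ?v = "pos_part (y - b)" let ?\<pi> = "band_proj ?v"
  have v0: "0 \<le> ?v" by (rule pos_part_nonneg)
  have pb0: "0 \<le> ?\<pi> b" using band_proj_nonneg_eq[OF b0] band_part_nonneg[OF b0] by simp
  have "?\<pi> y = ?\<pi> (y - b) + ?\<pi> b" using band_proj_add[OF v0, of "y - b" b] by simp
  then have py: "?\<pi> y = ?v + ?\<pi> b" by (simp only: band_proj_pos_part)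
  have "y - b \<le> ?v" unfolding pos_part_def by simp
  then have "y \<le> b + ?v" by (simp add: diff_le_eq add.commute)
  also have "\<dots> \<le> b + ?\<pi> y" using py pb0 by simp
  finally show "y - ?\<pi> y \<le> b" by (simp add: diff_le_eq)
  have "0 \<le> y - ?\<pi> y" by (rule band_projection_nonneg(1)[OF band_projection_diff_band_proj[OF v0] y0])
  have "?\<pi> b \<le> ?v + ?\<pi> b" using v0 by (rule add_increasing[OF _ order_refl])
  also have "\<dots> \<le> y" using py \<open>0 \<le> y - ?\<pi> y\<close> by simp
  finally show "?\<pi> b \<le> y" .
qed

lemma le_0_of_le_nsmul_scaleR:
  fixes z s :: "'b::{ordered_real_vector,conditionally_complete_lattice}"
  assumes s0: "0 \<le> s" and h: "\<And>\<epsilon>. 0 < \<epsilon> \<Longrightarrow> z \<le> nsmul n (\<epsilon> *\<^sub>R s)"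
  shows "z \<le> 0"
proof (cases "n = 0")
  case True
  then show ?thesis using h[of 1] by simp
next
  case False
  have "nsmul k (pos_part z) \<le> s" for k
  proof (cases "k = 0")
    case True then show ?thesis using s0 by simp
  next
    case False
    let ?\<epsilon> = "1 / (real n * real k)"
    have ep: "0 < ?\<epsilon>" using False \<open>n \<noteq> 0\<close> by simp
    have "z \<le> nsmul n (?\<epsilon> *\<^sub>R s)" by (rule h[OF ep])
    also have "nsmul n (?\<epsilon> *\<^sub>R s) = (1 / real k) *\<^sub>R s" using \<open>n \<noteq> 0\<close> by (simp add: nsmul_eq_scaleR)
    finally have "z \<le> (1 / real k) *\<^sub>R s" .
    then have "real k *\<^sub>R z \<le> real k *\<^sub>R ((1 / real k) *\<^sub>R s)" by (rule scaleR_left_mono) simp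
    then have kz: "real k *\<^sub>R z \<le> s" using False by simp
    have "nsmul k (pos_part z) = real k *\<^sub>R sup z 0" by (simp add: nsmul_eq_scaleR pos_part_def)
    also have "\<dots> = sup (real k *\<^sub>R z) 0" by (simp add: scaleR_sup_nonneg)
    also have "\<dots> \<le> s" using kz s0 by simp
    finally show ?thesis .
  qed
  then have "pos_part z = 0" by (rule nsmul_bounded_eq_0[OF pos_part_nonneg])
  then show ?thesis unfolding pos_part_def by (metis sup.bounded_iff order_refl)
qed

lemma le_0_of_le_band_part:
  fixes z y b :: "'b::{ordered_real_vector,conditionally_complete_lattice}"
  assumes y0: "0 \<le> y" and b0: "0 \<le> b" and h: "\<And>n. z \<le> band_part b (pos_part (y - nsmul n b))"
  shows "z \<le> 0"
proof -
  let ?a = "\<lambda>n. pos_part (y - nsmul n b)"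
  let ?g = "pos_part z"
  have g0: "0 \<le> ?g" by (rule pos_part_nonneg)
  have gc: "?g \<le> band_part b (?a n)" for n
    unfolding pos_part_def[of z] using h[of n] band_part_nonneg[OF pos_part_nonneg, of b "y - nsmul n b"] by (rule le_supI)
  have "inf ?g b \<le> inf (?a n) b" for n
  proof -
    have "inf ?g b \<le> inf b (band_part b (?a n))" using gc[of n] by (simp add: inf_commute le_infI2 inf_mono)
    also have "inf b (band_part b (?a n)) = Sup (inf b ` range (\<lambda>k. inf (?a n) (nsmul k b)))"
      unfolding band_part_def by (rule inf_cSup[OF _ band_part_bdd]) simp
    also have "\<dots> \<le> inf (?a n) b"
      by (rule cSup_least) (auto intro: le_infI1 le_infI2)
    finally show ?thesis .
  qed
  then have "nsmul n (inf ?g b) \<le> y" for n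
    using order_trans[OF nsmul_mono nsmul_inf_pos_part_le[OF y0 b0, of n]] by blast
  then have gb: "inf ?g b = 0" by (intro nsmul_bounded_eq_0[of "inf ?g b" y]) (simp_all add: g0 b0)
  have "?g = inf ?g (band_part b (?a 1))" using gc[of 1] by (simp add: inf.absorb1)
  also have "\<dots> = Sup (inf ?g ` range (\<lambda>k. inf (?a 1) (nsmul k b)))"
    unfolding band_part_def by (rule inf_cSup[OF _ band_part_bdd]) simp
  also have "\<dots> \<le> 0"
  proof (rule cSup_least)
    show "inf ?g ` range (\<lambda>k. inf (?a 1) (nsmul k b)) \<noteq> {}" by simp
    fix w assume "w \<in> inf ?g ` range (\<lambda>k. inf (?a 1) (nsmul k b))"
    then obtain k where k: "w = inf ?g (inf (?a 1) (nsmul k b))" by auto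
    have "w \<le> inf ?g (nsmul k b)" using k by (simp add: le_infI2 inf_mono)
    also have "inf ?g (nsmul k b) = 0" by (rule inf_nsmul_eq_0[OF g0 b0 gb])
    finally show "w \<le> 0" .
  qed
  finally have "?g \<le> 0" .
  then show ?thesis unfolding pos_part_def by (metis sup.bounded_iff)
qed

section \<open>Uryson operators\<close>

lemma uryson_orth_additive: "uryson T \<Longrightarrow> orth_additive T" by (simp add: uryson_def)

lemma orth_additive_0: "orth_additive (T::'a::{ordered_ab_group_add,lattice} \<Rightarrow> 'b::ab_group_add) \<Longrightarrow> T 0 = 0"
proof -
  assume a: "orth_additive T"
  have "T (0 + 0) = T 0 + T 0" using a vl_disj_0_right unfolding orth_additive_def by blast
  then show ?thesis by simp
qed

lemma orth_additive_fragment: "orth_additive T \<Longrightarrow> z \<in> fragments x \<Longrightarrow> T x = T z + T (x - z)"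
proof -
  assume a: "orth_additive T" "z \<in> fragments x"
  have "T (z + (x - z)) = T z + T (x - z)" using a unfolding orth_additive_def fragments_def by blast
  then show ?thesis by simp
qed

lemma uryson_fragments_bounded:
  fixes T :: "'a::{ordered_real_vector,lattice} \<Rightarrow> 'b::{ordered_real_vector,lattice}"
  assumes "uryson T" "X \<subseteq> {a..b}"
  shows "\<exists>lo hi. \<forall>x\<in>X. \<forall>z\<in>fragments x. lo \<le> T z \<and> T z \<le> hi"
proof -
  let ?c = "vl_abs a + vl_abs b"
  have "order_bounded_set {- ?c..?c}" unfolding order_bounded_set_def by blast
  then have "order_bounded_set (T ` {- ?c..?c})" using assms(1) by (simp add: uryson_def order_bounded_op_def)
  then obtain lo hi where lh: "T ` {- ?c..?c} \<subseteq> {lo..hi}" unfolding order_bounded_set_def by blast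
  have "lo \<le> T z \<and> T z \<le> hi" if "x \<in> X" "z \<in> fragments x" for x z
  proof -
    have "vl_abs x \<le> ?c" using assms(2) that(1) by (intro vl_abs_le_of_between) auto
    moreover have "- vl_abs x \<le> z \<and> z \<le> vl_abs x" by (rule fragment_bounds[OF that(2)])
    ultimately have c1: "vl_abs x \<le> ?c" and f1: "- vl_abs x \<le> z" and f2: "z \<le> vl_abs x" by simp_all
    have c2: "- ?c \<le> - vl_abs x" using c1 by (simp only: neg_le_iff_le)
    have "- ?c \<le> z" by (rule order_trans[OF c2 f1])
    moreover have "z \<le> ?c" by (rule order_trans[OF f2 c1])
    ultimately have "z \<in> {- ?c..?c}" by simp
    then have "T z \<in> {lo..hi}" using lh by blast
    then show ?thesis by simp
  qed
  then show ?thesis by blast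
qed

lemma uryson_fragments_bounded_point:
  fixes T :: "'a::{ordered_real_vector,lattice} \<Rightarrow> 'b::{ordered_real_vector,lattice}"
  assumes "uryson T"
  shows "\<exists>lo hi. \<forall>z\<in>fragments x. lo \<le> T z \<and> T z \<le> hi"
  using uryson_fragments_bounded[OF assms, of "{x}" x x] by auto

definition ury_inf :: "('a::{ordered_real_vector,lattice} \<Rightarrow> 'b::{ordered_real_vector,conditionally_complete_lattice})
   \<Rightarrow> ('a \<Rightarrow> 'b) \<Rightarrow> 'a \<Rightarrow> 'b" where
  "ury_inf P Q x = Inf ((\<lambda>y. P y + Q (x - y)) ` fragments x)"

definition ury_sup :: "('a::{ordered_real_vector,lattice} \<Rightarrow> 'b::{ordered_real_vector,conditionally_complete_lattice})
   \<Rightarrow> ('a \<Rightarrow> 'b) \<Rightarrow> 'a \<Rightarrow> 'b" where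
  "ury_sup P Q x = Sup ((\<lambda>y. P y + Q (x - y)) ` fragments x)"

lemma ury_inf_sup_bdd:
  fixes P Q :: "'a::{ordered_real_vector,lattice} \<Rightarrow> 'b::{ordered_real_vector,conditionally_complete_lattice}"
  assumes "uryson P" "uryson Q"
  shows "bdd_below ((\<lambda>y. P y + Q (x - y)) ` fragments x)" "bdd_above ((\<lambda>y. P y + Q (x - y)) ` fragments x)"
proof -
  obtain lo1 hi1 where 1: "\<forall>z\<in>fragments x. lo1 \<le> P z \<and> P z \<le> hi1" using uryson_fragments_bounded_point[OF assms(1)] by blast
  obtain lo2 hi2 where 2: "\<forall>z\<in>fragments x. lo2 \<le> Q z \<and> Q z \<le> hi2" using uryson_fragments_bounded_point[OF assms(2)] by blast
  have "y \<in> fragments x \<Longrightarrow> x - y \<in> fragments x" for y by (rule fragments_diff)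
  then show "bdd_below ((\<lambda>y. P y + Q (x - y)) ` fragments x)"
    using 1 2 by (auto intro!: bdd_belowI[of _ "lo1 + lo2"] add_mono)
  show "bdd_above ((\<lambda>y. P y + Q (x - y)) ` fragments x)"
    using 1 2 fragments_diff by (auto intro!: bdd_aboveI[of _ "hi1 + hi2"] add_mono)
qed

lemma ury_inf_le1: "uryson P \<Longrightarrow> uryson Q \<Longrightarrow> ury_inf P Q x \<le> P x"
proof -
  assume a: "uryson P" "uryson Q"
  have m: "P x + Q (x - x) \<in> (\<lambda>y. P y + Q (x - y)) ` fragments x" by (rule imageI) simp
  have "ury_inf P Q x \<le> P x + Q (x - x)" unfolding ury_inf_def by (rule cInf_lower[OF m ury_inf_sup_bdd(1)[OF a]])
  then show ?thesis by (simp add: orth_additive_0 uryson_orth_additive a)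
qed

lemma ury_inf_le2: "uryson P \<Longrightarrow> uryson Q \<Longrightarrow> ury_inf P Q x \<le> Q x"
proof -
  assume a: "uryson P" "uryson Q"
  have m: "P 0 + Q (x - 0) \<in> (\<lambda>y. P y + Q (x - y)) ` fragments x" by (rule imageI) simp
  have "ury_inf P Q x \<le> P 0 + Q (x - 0)" unfolding ury_inf_def by (rule cInf_lower[OF m ury_inf_sup_bdd(1)[OF a]])
  then show ?thesis by (simp add: orth_additive_0 uryson_orth_additive a)
qed

lemma ury_inf_greatest:
  assumes "orth_additive R" "\<And>x. R x \<le> P x" "\<And>x. R x \<le> Q x"
  shows "R x \<le> ury_inf P Q x"
  unfolding ury_inf_def
proof (rule cInf_greatest)
  show "(\<lambda>y. P y + Q (x - y)) ` fragments x \<noteq> {}" by auto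
  fix w assume "w \<in> (\<lambda>y. P y + Q (x - y)) ` fragments x"
  then obtain y where y: "y \<in> fragments x" "w = P y + Q (x - y)" by auto
  have "R x = R y + R (x - y)" by (rule orth_additive_fragment[OF assms(1) y(1)])
  also have "\<dots> \<le> P y + Q (x - y)" using assms(2,3) by (rule add_mono)
  finally show "R x \<le> w" using y by simp
qed

lemma ury_sup_ge1: "uryson P \<Longrightarrow> uryson Q \<Longrightarrow> P x \<le> ury_sup P Q x"
proof -
  assume a: "uryson P" "uryson Q"
  have m: "P x + Q (x - x) \<in> (\<lambda>y. P y + Q (x - y)) ` fragments x" by (rule imageI) simp
  have "P x + Q (x - x) \<le> ury_sup P Q x" unfolding ury_sup_def by (rule cSup_upper[OF m ury_inf_sup_bdd(2)[OF a]])
  then show ?thesis by (simp add: orth_additive_0 uryson_orth_additive a)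
qed

lemma ury_sup_ge2: "uryson P \<Longrightarrow> uryson Q \<Longrightarrow> Q x \<le> ury_sup P Q x"
proof -
  assume a: "uryson P" "uryson Q"
  have m: "P 0 + Q (x - 0) \<in> (\<lambda>y. P y + Q (x - y)) ` fragments x" by (rule imageI) simp
  have "P 0 + Q (x - 0) \<le> ury_sup P Q x" unfolding ury_sup_def by (rule cSup_upper[OF m ury_inf_sup_bdd(2)[OF a]])
  then show ?thesis by (simp add: orth_additive_0 uryson_orth_additive a)
qed

lemma ury_sup_least:
  assumes "orth_additive R" "\<And>x. P x \<le> R x" "\<And>x. Q x \<le> R x"
  shows "ury_sup P Q x \<le> R x"
  unfolding ury_sup_def
proof (rule cSup_least)
  show "(\<lambda>y. P y + Q (x - y)) ` fragments x \<noteq> {}" by auto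
  fix w assume "w \<in> (\<lambda>y. P y + Q (x - y)) ` fragments x"
  then obtain y where y: "y \<in> fragments x" "w = P y + Q (x - y)" by auto
  have "P y + Q (x - y) \<le> R y + R (x - y)" using assms(2,3) by (rule add_mono)
  also have "\<dots> = R x" by (rule orth_additive_fragment[OF assms(1) y(1), symmetric])
  finally show "w \<le> R x" using y by simp
qed

lemma image_fragments_add:
  fixes P Q :: "'a::{ordered_real_vector,lattice} \<Rightarrow> 'b::{ordered_real_vector,lattice}"
  assumes "orth_additive P" "orth_additive Q" "vl_disj u v"
  shows "(\<lambda>y. P y + Q (u + v - y)) ` fragments (u + v) =
    {(P a + Q (u - a)) + (P b + Q (v - b)) |a b. a \<in> fragments u \<and> b \<in> fragments v}"
proof -
  have key: "P (a + b) + Q (u + v - (a + b)) = (P a + Q (u - a)) + (P b + Q (v - b))"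
    if "a \<in> fragments u" "b \<in> fragments v" for a b
  proof -
    have e1: "P (a + b) = P a + P b" using assms(1) fragments_add(2)[OF assms(3) that]
      by (simp add: orth_additive_def)
    have e2: "Q ((u - a) + (v - b)) = Q (u - a) + Q (v - b)" using assms(2) fragments_add(3)[OF assms(3) that]
      by (simp add: orth_additive_def)
    have e3: "u + v - (a + b) = (u - a) + (v - b)" by (simp add: algebra_simps)
    show ?thesis unfolding e3 e1 e2 by (simp only: add_ac)
  qed
  show ?thesis
  proof (intro set_eqI iffI)
    fix w assume "w \<in> (\<lambda>y. P y + Q (u + v - y)) ` fragments (u + v)"
    then obtain z where z: "z \<in> fragments (u + v)" "w = P z + Q (u + v - z)" by auto
    obtain a b where ab: "a \<in> fragments u" "b \<in> fragments v" "z = a + b" using fragments_add_split[OF assms(3) z(1)] by blast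
    show "w \<in> {(P a + Q (u - a)) + (P b + Q (v - b)) |a b. a \<in> fragments u \<and> b \<in> fragments v}"
      using key[OF ab(1,2)] z(2) ab by blast
  next
    fix w assume "w \<in> {(P a + Q (u - a)) + (P b + Q (v - b)) |a b. a \<in> fragments u \<and> b \<in> fragments v}"
    then obtain a b where ab: "a \<in> fragments u" "b \<in> fragments v" "w = (P a + Q (u - a)) + (P b + Q (v - b))"
      by blast
    have "a + b \<in> fragments (u + v)" by (rule fragments_add(1)[OF assms(3) ab(1,2)])
    then have "P (a + b) + Q (u + v - (a + b)) \<in> (\<lambda>y. P y + Q (u + v - y)) ` fragments (u + v)"
      by (rule imageI)
    then show "w \<in> (\<lambda>y. P y + Q (u + v - y)) ` fragments (u + v)"
      using key[OF ab(1,2)] ab(3) by simp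
  qed
qed

lemma orth_additive_ury_inf:
  assumes "uryson P" "uryson Q"
  shows "orth_additive (ury_inf P Q)"
  unfolding orth_additive_def
proof (intro allI impI)
  fix u v :: 'a assume uv: "vl_disj u v"
  have "ury_inf P Q (u + v) = Inf {(P a + Q (u - a)) + (P b + Q (v - b)) |a b. a \<in> fragments u \<and> b \<in> fragments v}"
    unfolding ury_inf_def image_fragments_add[OF uryson_orth_additive[OF assms(1)] uryson_orth_additive[OF assms(2)] uv] ..
  also have "\<dots> = ury_inf P Q u + ury_inf P Q v" unfolding ury_inf_def
    by (rule cInf_add_set) (auto intro: ury_inf_sup_bdd[OF assms])
  finally show "ury_inf P Q (u + v) = ury_inf P Q u + ury_inf P Q v" .
qed

lemma orth_additive_ury_sup:
  assumes "uryson P" "uryson Q"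
  shows "orth_additive (ury_sup P Q)"
  unfolding orth_additive_def
proof (intro allI impI)
  fix u v :: 'a assume uv: "vl_disj u v"
  have "ury_sup P Q (u + v) = Sup {(P a + Q (u - a)) + (P b + Q (v - b)) |a b. a \<in> fragments u \<and> b \<in> fragments v}"
    unfolding ury_sup_def image_fragments_add[OF uryson_orth_additive[OF assms(1)] uryson_orth_additive[OF assms(2)] uv] ..
  also have "\<dots> = ury_sup P Q u + ury_sup P Q v" unfolding ury_sup_def
    by (rule cSup_add_set) (auto intro: ury_inf_sup_bdd[OF assms])
  finally show "ury_sup P Q (u + v) = ury_sup P Q u + ury_sup P Q v" .
qed

lemma uryson_ury_inf:
  assumes "uryson P" "uryson Q"
  shows "uryson (ury_inf P Q)"
  unfolding uryson_def
proof (intro conjI)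
  show "orth_additive (ury_inf P Q)" by (rule orth_additive_ury_inf[OF assms])
  show "order_bounded_op (ury_inf P Q)" unfolding order_bounded_op_def
  proof (intro allI impI)
    fix X :: "'a set" assume "order_bounded_set X"
    then obtain a b where X: "X \<subseteq> {a..b}" unfolding order_bounded_set_def by blast
    obtain lo1 hi1 where 1: "\<forall>x\<in>X. \<forall>z\<in>fragments x. lo1 \<le> P z \<and> P z \<le> hi1" using uryson_fragments_bounded[OF assms(1) X] by blast
    obtain lo2 hi2 where 2: "\<forall>x\<in>X. \<forall>z\<in>fragments x. lo2 \<le> Q z \<and> Q z \<le> hi2" using uryson_fragments_bounded[OF assms(2) X] by blast
    have "lo1 + lo2 \<le> ury_inf P Q x \<and> ury_inf P Q x \<le> hi1" if x: "x \<in> X" for x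
    proof
      show "ury_inf P Q x \<le> hi1" using ury_inf_le1[OF assms, of x] 1 x fragments_self by (blast intro: order_trans)
      show "lo1 + lo2 \<le> ury_inf P Q x" unfolding ury_inf_def
      proof (rule cInf_greatest)
        show "(\<lambda>y. P y + Q (x - y)) ` fragments x \<noteq> {}" by simp
        fix w assume "w \<in> (\<lambda>y. P y + Q (x - y)) ` fragments x"
        then obtain y where y: "y \<in> fragments x" "w = P y + Q (x - y)" by auto
        have "lo1 \<le> P y" using 1 x y(1) by blast
        moreover have "lo2 \<le> Q (x - y)" using 2 x fragments_diff[OF y(1)] by blast
        ultimately show "lo1 + lo2 \<le> w" using y(2) by (simp add: add_mono)
      qed
    qed
    then have "ury_inf P Q ` X \<subseteq> {lo1 + lo2..hi1}" by auto
    then show "order_bounded_set (ury_inf P Q ` X)" unfolding order_bounded_set_def by blast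
  qed
qed

lemma uryson_ury_sup:
  assumes "uryson P" "uryson Q"
  shows "uryson (ury_sup P Q)"
  unfolding uryson_def
proof (intro conjI)
  show "orth_additive (ury_sup P Q)" by (rule orth_additive_ury_sup[OF assms])
  show "order_bounded_op (ury_sup P Q)" unfolding order_bounded_op_def
  proof (intro allI impI)
    fix X :: "'a set" assume "order_bounded_set X"
    then obtain a b where X: "X \<subseteq> {a..b}" unfolding order_bounded_set_def by blast
    obtain lo1 hi1 where 1: "\<forall>x\<in>X. \<forall>z\<in>fragments x. lo1 \<le> P z \<and> P z \<le> hi1" using uryson_fragments_bounded[OF assms(1) X] by blast
    obtain lo2 hi2 where 2: "\<forall>x\<in>X. \<forall>z\<in>fragments x. lo2 \<le> Q z \<and> Q z \<le> hi2" using uryson_fragments_bounded[OF assms(2) X] by blast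
    have "lo1 \<le> ury_sup P Q x \<and> ury_sup P Q x \<le> hi1 + hi2" if x: "x \<in> X" for x
    proof
      show "lo1 \<le> ury_sup P Q x" using ury_sup_ge1[OF assms, of x] 1 x fragments_self by (blast intro: order_trans)
      show "ury_sup P Q x \<le> hi1 + hi2" unfolding ury_sup_def
      proof (rule cSup_least)
        show "(\<lambda>y. P y + Q (x - y)) ` fragments x \<noteq> {}" by simp
        fix w assume "w \<in> (\<lambda>y. P y + Q (x - y)) ` fragments x"
        then obtain y where y: "y \<in> fragments x" "w = P y + Q (x - y)" by auto
        have "P y \<le> hi1" using 1 x y(1) by blast
        moreover have "Q (x - y) \<le> hi2" using 2 x fragments_diff[OF y(1)] by blast
        ultimately show "w \<le> hi1 + hi2" using y(2) by (simp add: add_mono)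
      qed
    qed
    then have "ury_sup P Q ` X \<subseteq> {lo1..hi1 + hi2}" by auto
    then show "order_bounded_set (ury_sup P Q ` X)" unfolding order_bounded_set_def by blast
  qed
qed

lemma uryson_zero: "uryson (\<lambda>x::'a::{ordered_real_vector,lattice}. 0::'b::{ordered_real_vector,lattice})"
proof -
  have "order_bounded_set ((\<lambda>x. 0::'b) ` X)" for X :: "'a set"
    unfolding order_bounded_set_def by (rule exI[of _ 0], rule exI[of _ 0]) auto
  then show ?thesis unfolding uryson_def orth_additive_def order_bounded_op_def by simp
qed

lemma uryson_add:
  fixes S T :: "'a::{ordered_real_vector,lattice} \<Rightarrow> 'b::{ordered_real_vector,lattice}"
  assumes "uryson S" "uryson T" shows "uryson (\<lambda>x. S x + T x)"
  unfolding uryson_def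
proof (intro conjI)
  show "orth_additive (\<lambda>x. S x + T x)" unfolding orth_additive_def
  proof (intro allI impI)
    fix x y :: 'a assume "vl_disj x y"
    then have "S (x + y) = S x + S y" "T (x + y) = T x + T y"
      using assms unfolding uryson_def orth_additive_def by blast+
    then show "S (x + y) + T (x + y) = S x + T x + (S y + T y)" by (simp add: add_ac)
  qed
  show "order_bounded_op (\<lambda>x. S x + T x)" unfolding order_bounded_op_def
  proof (intro allI impI)
    fix X :: "'a set" assume X: "order_bounded_set X"
    have "order_bounded_set (S ` X)" using assms(1) X by (simp add: uryson_def order_bounded_op_def)
    then obtain a1 b1 where 1: "S ` X \<subseteq> {a1..b1}" unfolding order_bounded_set_def by blast
    have "order_bounded_set (T ` X)" using assms(2) X by (simp add: uryson_def order_bounded_op_def)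
    then obtain a2 b2 where 2: "T ` X \<subseteq> {a2..b2}" unfolding order_bounded_set_def by blast
    have "(\<lambda>x. S x + T x) ` X \<subseteq> {a1 + a2..b1 + b2}"
    proof (rule image_subsetI)
      fix x assume "x \<in> X"
      then have "S x \<in> {a1..b1}" "T x \<in> {a2..b2}" using 1 2 by auto
      then show "S x + T x \<in> {a1 + a2..b1 + b2}" by (simp add: add_mono)
    qed
    then show "order_bounded_set ((\<lambda>x. S x + T x) ` X)" unfolding order_bounded_set_def by blast
  qed
qed

lemma uryson_uminus:
  fixes S :: "'a::{ordered_real_vector,lattice} \<Rightarrow> 'b::{ordered_real_vector,lattice}"
  assumes "uryson S" shows "uryson (\<lambda>x. - S x)"
  unfolding uryson_def
proof (intro conjI)
  show "orth_additive (\<lambda>x. - S x)" unfolding orth_additive_def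
  proof (intro allI impI)
    fix x y :: 'a assume "vl_disj x y"
    then have "S (x + y) = S x + S y"
      using assms unfolding uryson_def orth_additive_def by blast
    then show "- S (x + y) = - S x + - S y" by simp
  qed
  show "order_bounded_op (\<lambda>x. - S x)" unfolding order_bounded_op_def
  proof (intro allI impI)
    fix X :: "'a set" assume X: "order_bounded_set X"
    have "order_bounded_set (S ` X)" using assms(1) X by (simp add: uryson_def order_bounded_op_def)
    then obtain a1 b1 where 1: "S ` X \<subseteq> {a1..b1}" unfolding order_bounded_set_def by blast
    have "(\<lambda>x. - S x) ` X \<subseteq> {- b1..- a1}"
    proof (rule image_subsetI)
      fix x assume "x \<in> X"
      then have "S x \<in> {a1..b1}" using 1 by auto
      then show "- S x \<in> {- b1..- a1}" by simp
    qed
    then show "order_bounded_set ((\<lambda>x. - S x) ` X)" unfolding order_bounded_set_def by blast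
  qed
qed

lemma uryson_diff:
  fixes S T :: "'a::{ordered_real_vector,lattice} \<Rightarrow> 'b::{ordered_real_vector,lattice}"
  assumes "uryson S" "uryson T" shows "uryson (\<lambda>x. S x - T x)"
  using uryson_add[OF assms(1) uryson_uminus[OF assms(2)]] by simp

lemma U_le_iff: "U_le S T \<longleftrightarrow> (\<forall>x. S x \<le> T x)"
  by (simp add: U_le_def positive_op_def)

lemma U_plusD: "S \<in> U_plus \<Longrightarrow> uryson S" "S \<in> U_plus \<Longrightarrow> 0 \<le> S x"
  by (simp_all add: U_plus_def positive_op_def)

lemma U_plus_fragment_le:
  assumes "T \<in> U_plus" "f \<in> fragments e"
  shows "T f \<le> T e"
proof -
  have "T e = T f + T (e - f)" by (rule orth_additive_fragment[OF uryson_orth_additive[OF U_plusD(1)[OF assms(1)]] assms(2)])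
  moreover have "0 \<le> T (e - f)" by (rule U_plusD(2)[OF assms(1)])
  ultimately show ?thesis by simp
qed

lemma uryson_nsmul: "uryson S \<Longrightarrow> uryson (\<lambda>x. nsmul n (S x))"
  by (induction n) (simp_all add: uryson_zero uryson_add)

lemma diff_ury_inf:
  fixes T N :: "'a::{ordered_real_vector,lattice} \<Rightarrow> 'b::{ordered_real_vector,conditionally_complete_lattice}"
  assumes "uryson T" "uryson N"
  shows "T e - ury_inf T N e = Sup ((\<lambda>f. T f - N f) ` fragments e)"
proof -
  have "T e - ury_inf T N e = Sup ((\<lambda>y. T e - (T y + N (e - y))) ` fragments e)"
    unfolding ury_inf_def by (subst diff_cInf) (simp_all add: ury_inf_sup_bdd[OF assms] image_image)
  also have "\<dots> = Sup ((\<lambda>y. T (e - y) - N (e - y)) ` fragments e)"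
    using orth_additive_fragment[OF uryson_orth_additive[OF assms(1)]]
    by (intro arg_cong[where f = Sup] image_cong) (auto simp: algebra_simps)
  also have "\<dots> = Sup ((\<lambda>f. T f - N f) ` fragments e)"
    by (subst image_diff_fragments[symmetric]) (simp add: image_image)
  finally show ?thesis .
qed

text \<open>U(E,F) as a type, so that the lattice-group lemmas apply to it; its lattice operations are
  ury_inf and ury_sup, which coincide with U_inf and U_sup.\<close>

typedef (overloaded) ('a::"{ordered_real_vector,lattice}", 'b::"{ordered_real_vector,conditionally_complete_lattice}") ury
  = "{T::'a \<Rightarrow> 'b. uryson T}"
  by (rule exI[of _ "\<lambda>x. 0"]) (simp add: uryson_zero)

setup_lifting type_definition_ury

instantiation ury :: ("{ordered_real_vector,lattice}", "{ordered_real_vector,conditionally_complete_lattice}") ordered_ab_group_add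
begin

lift_definition zero_ury :: "('a,'b) ury" is "\<lambda>x. 0" by (rule uryson_zero)
lift_definition plus_ury :: "('a,'b) ury \<Rightarrow> ('a,'b) ury \<Rightarrow> ('a,'b) ury" is "\<lambda>S T x. S x + T x" by (rule uryson_add)
lift_definition minus_ury :: "('a,'b) ury \<Rightarrow> ('a,'b) ury \<Rightarrow> ('a,'b) ury" is "\<lambda>S T x. S x - T x" by (rule uryson_diff)
lift_definition uminus_ury :: "('a,'b) ury \<Rightarrow> ('a,'b) ury" is "\<lambda>S x. - S x" by (rule uryson_uminus)
lift_definition less_eq_ury :: "('a,'b) ury \<Rightarrow> ('a,'b) ury \<Rightarrow> bool" is "\<lambda>S T. \<forall>x. S x \<le> T x" .
definition less_ury :: "('a,'b) ury \<Rightarrow> ('a,'b) ury \<Rightarrow> bool" where "less_ury S T \<longleftrightarrow> S \<le> T \<and> \<not> T \<le> S"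

instance
proof
  fix a b c :: "('a,'b) ury"
  show "a + b + c = a + (b + c)" by transfer (simp add: add.assoc)
  show "a + b = b + a" by transfer (simp add: add.commute)
  show "0 + a = a" by transfer simp
  show "- a + a = 0" by transfer simp
  show "a - b = a + - b" by transfer simp
  show "a < b \<longleftrightarrow> a \<le> b \<and> \<not> b \<le> a" by (simp add: less_ury_def)
  show "a \<le> a" by transfer simp
  show "a \<le> b \<Longrightarrow> b \<le> c \<Longrightarrow> a \<le> c" by transfer (blast intro: order_trans)
  show "a \<le> b \<Longrightarrow> b \<le> a \<Longrightarrow> a = b" by transfer (simp add: fun_eq_iff order.antisym)
  show "a \<le> b \<Longrightarrow> c + a \<le> c + b" by transfer (simp add: add_left_mono)
qed

end

instantiation ury :: ("{ordered_real_vector,lattice}", "{ordered_real_vector,conditionally_complete_lattice}") lattice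
begin

lift_definition inf_ury :: "('a,'b) ury \<Rightarrow> ('a,'b) ury \<Rightarrow> ('a,'b) ury" is ury_inf by (rule uryson_ury_inf)
lift_definition sup_ury :: "('a,'b) ury \<Rightarrow> ('a,'b) ury \<Rightarrow> ('a,'b) ury" is ury_sup by (rule uryson_ury_sup)

instance
proof
  fix a b c :: "('a,'b) ury"
  show "inf a b \<le> a" by transfer (simp add: ury_inf_le1)
  show "inf a b \<le> b" by transfer (simp add: ury_inf_le2)
  show "a \<le> b \<Longrightarrow> a \<le> c \<Longrightarrow> a \<le> inf b c" by transfer (simp add: ury_inf_greatest uryson_orth_additive)
  show "a \<le> sup a b" by transfer (simp add: ury_sup_ge1)
  show "b \<le> sup a b" by transfer (simp add: ury_sup_ge2)
  show "b \<le> a \<Longrightarrow> c \<le> a \<Longrightarrow> sup b c \<le> a" by transfer (simp add: ury_sup_least uryson_orth_additive)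
qed

end

lemma U_inf_eq_ury_inf:
  assumes "uryson P" "uryson Q"
  shows "U_inf P Q = ury_inf P Q"
  unfolding U_inf_def
proof (rule the_equality)
  show "uryson (ury_inf P Q) \<and> U_le (ury_inf P Q) P \<and> U_le (ury_inf P Q) Q \<and>
     (\<forall>Qa. uryson Qa \<and> U_le Qa P \<and> U_le Qa Q \<longrightarrow> U_le Qa (ury_inf P Q))"
    using assms by (simp add: U_le_iff uryson_ury_inf ury_inf_le1 ury_inf_le2 ury_inf_greatest uryson_orth_additive)
  fix R assume R: "uryson R \<and> U_le R P \<and> U_le R Q \<and> (\<forall>Qa. uryson Qa \<and> U_le Qa P \<and> U_le Qa Q \<longrightarrow> U_le Qa R)"
  have 1: "\<forall>x. R x \<le> ury_inf P Q x" using R by (simp add: U_le_iff ury_inf_greatest uryson_orth_additive)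
  have 2: "\<forall>x. ury_inf P Q x \<le> R x" using R assms by (simp add: U_le_iff uryson_ury_inf ury_inf_le1 ury_inf_le2)
  show "R = ury_inf P Q" using 1 2 by (simp add: fun_eq_iff order.antisym)
qed

lemma U_sup_eq_ury_sup:
  assumes "uryson P" "uryson Q"
  shows "U_sup P Q = ury_sup P Q"
  unfolding U_sup_def
proof (rule the_equality)
  show "uryson (ury_sup P Q) \<and> U_le P (ury_sup P Q) \<and> U_le Q (ury_sup P Q) \<and>
     (\<forall>Qa. uryson Qa \<and> U_le P Qa \<and> U_le Q Qa \<longrightarrow> U_le (ury_sup P Q) Qa)"
    using assms by (simp add: U_le_iff uryson_ury_sup ury_sup_ge1 ury_sup_ge2 ury_sup_least uryson_orth_additive)
  fix R assume R: "uryson R \<and> U_le P R \<and> U_le Q R \<and> (\<forall>Qa. uryson Qa \<and> U_le P Qa \<and> U_le Q Qa \<longrightarrow> U_le R Qa)"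
  have 1: "\<forall>x. ury_sup P Q x \<le> R x" using R by (simp add: U_le_iff ury_sup_least uryson_orth_additive)
  have 2: "\<forall>x. R x \<le> ury_sup P Q x" using R assms by (simp add: U_le_iff uryson_ury_sup ury_sup_ge1 ury_sup_ge2)
  show "R = ury_sup P Q" using 1 2 by (simp add: fun_eq_iff order.antisym)
qed

lemma uryson_Rep: "uryson (Rep_ury a)" using Rep_ury by simp

lemma Rep_ury_inf: "Rep_ury (inf a b) = U_inf (Rep_ury a) (Rep_ury b)"
  by (simp add: U_inf_eq_ury_inf uryson_Rep inf_ury.rep_eq)

lemma Rep_ury_sup: "Rep_ury (sup a b) = U_sup (Rep_ury a) (Rep_ury b)"
  by (simp add: U_sup_eq_ury_sup uryson_Rep sup_ury.rep_eq)

lemma U_abs_Rep_ury: "U_abs (Rep_ury a) = Rep_ury (vl_abs a)"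
proof -
  have "(\<lambda>x. - Rep_ury a x) = Rep_ury (- a)" by (simp add: uminus_ury.rep_eq fun_eq_iff)
  then show ?thesis by (simp add: U_abs_def vl_abs_def Rep_ury_sup)
qed

lemma U_disj_Rep_ury: "U_disj (Rep_ury a) (Rep_ury b) \<longleftrightarrow> vl_disj a b"
proof -
  have "(\<lambda>x. 0) = Rep_ury (0::('a,'b) ury)" by (simp add: zero_ury.rep_eq fun_eq_iff)
  then have "U_disj (Rep_ury a) (Rep_ury b) \<longleftrightarrow> Rep_ury (inf (vl_abs a) (vl_abs b)) = Rep_ury 0"
    by (simp add: U_disj_def U_abs_Rep_ury Rep_ury_inf)
  also have "\<dots> \<longleftrightarrow> inf (vl_abs a) (vl_abs b) = 0" by (rule Rep_ury_inject)
  finally show ?thesis by (simp add: vl_disj_def)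
qed

lemma less_eq_ury_iff: "a \<le> b \<longleftrightarrow> (\<forall>x. Rep_ury a x \<le> Rep_ury b x)"
  by transfer simp

lemma Rep_ury_plus: "Rep_ury (a + b) x = Rep_ury a x + Rep_ury b x"
  by transfer simp

lemma Rep_ury_minus: "Rep_ury (a - b) x = Rep_ury a x - Rep_ury b x"
  by transfer simp

lemma Rep_ury_zero: "Rep_ury 0 x = 0"
  by transfer simp

lemma Rep_ury_nsmul: "Rep_ury (nsmul n a) x = nsmul n (Rep_ury a x)"
  by (induction n) (simp_all add: Rep_ury_plus Rep_ury_zero)

lemma Rep_Abs_ury: "uryson X \<Longrightarrow> Rep_ury (Abs_ury X) = X"
  by (simp add: Abs_ury_inverse)

lemma U_disj_iff_Abs_ury:
  assumes "uryson X" "uryson Y"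
  shows "U_disj X Y \<longleftrightarrow> vl_disj (Abs_ury X) (Abs_ury Y)"
  using U_disj_Rep_ury[of "Abs_ury X" "Abs_ury Y"] assms by (simp add: Rep_Abs_ury)

lemma Abs_ury_diff:
  assumes "uryson X" "uryson Y"
  shows "Abs_ury (\<lambda>x. X x - Y x) = Abs_ury X - Abs_ury Y"
  using assms by (simp add: Rep_ury_inject[symmetric] fun_eq_iff Rep_ury_minus Rep_Abs_ury uryson_diff)

lemma U_disj_sym:
  fixes X Y :: "'a::{ordered_real_vector,lattice} \<Rightarrow> 'b::{ordered_real_vector,conditionally_complete_lattice}"
  shows "uryson X \<Longrightarrow> uryson Y \<Longrightarrow> U_disj X Y \<longleftrightarrow> U_disj Y X"
  by (simp add: U_disj_iff_Abs_ury vl_disj_sym[of "Abs_ury X"])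

lemma U_disj_diff:
  fixes X Y Z :: "'a::{ordered_real_vector,lattice} \<Rightarrow> 'b::{ordered_real_vector,conditionally_complete_lattice}"
  assumes "uryson X" "uryson Y" "uryson Z" "U_disj X Y" "U_disj X Z"
  shows "U_disj X (\<lambda>x. Y x - Z x)"
proof -
  have "vl_disj (Abs_ury X) (Abs_ury Y - Abs_ury Z)"
    using assms by (simp add: U_disj_iff_Abs_ury vl_disj_diff)
  then show ?thesis using assms by (simp add: U_disj_iff_Abs_ury uryson_diff Abs_ury_diff)
qed

lemma U_disj_self:
  fixes X :: "'a::{ordered_real_vector,lattice} \<Rightarrow> 'b::{ordered_real_vector,conditionally_complete_lattice}"
  shows "uryson X \<Longrightarrow> U_disj X X \<Longrightarrow> X = (\<lambda>x. 0)"
  by (metis U_disj_iff_Abs_ury vl_disj_self Rep_Abs_ury Rep_ury_zero)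

lemma ury_nsmul_bounded_eq_0:
  fixes q t :: "('a::{ordered_real_vector,lattice}, 'b::{ordered_real_vector,conditionally_complete_lattice}) ury"
  assumes "0 \<le> q" "\<And>n. nsmul n q \<le> t"
  shows "q = 0"
proof -
  have "Rep_ury q x = 0" for x
    by (rule nsmul_bounded_eq_0[of _ "Rep_ury t x"]) (use assms in \<open>simp_all add: less_eq_ury_iff Rep_ury_zero Rep_ury_nsmul\<close>)
  then have "Rep_ury q = Rep_ury 0" by (simp add: fun_eq_iff Rep_ury_zero)
  then show ?thesis by (simp add: Rep_ury_inject)
qed

section \<open>The band projection pi_A\<close>

lemma orth_additive_directed_Sup:
  fixes \<Phi> :: "'i \<Rightarrow> 'a::{ordered_ab_group_add,lattice} \<Rightarrow> 'b::{ordered_ab_group_add,conditionally_complete_lattice}"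
  assumes I: "I \<noteq> {}" and oa: "\<And>i. i \<in> I \<Longrightarrow> orth_additive (\<Phi> i)"
    and bdd: "\<And>x. bdd_above ((\<lambda>i. \<Phi> i x) ` I)"
    and dir: "\<And>i j. i \<in> I \<Longrightarrow> j \<in> I \<Longrightarrow> \<exists>k\<in>I. (\<forall>x. \<Phi> i x \<le> \<Phi> k x) \<and> (\<forall>x. \<Phi> j x \<le> \<Phi> k x)"
  shows "orth_additive (\<lambda>x. Sup ((\<lambda>i. \<Phi> i x) ` I))"
  unfolding orth_additive_def
proof (intro allI impI)
  fix u v :: 'a assume "vl_disj u v"
  then have "Sup ((\<lambda>i. \<Phi> i (u + v)) ` I) = Sup ((\<lambda>i. \<Phi> i u + \<Phi> i v) ` I)"
    using oa by (simp add: orth_additive_def cong: image_cong)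
  also have "\<dots> = Sup ((\<lambda>i. \<Phi> i u) ` I) + Sup ((\<lambda>i. \<Phi> i v) ` I)"
    by (rule cSup_add_directed[OF I bdd bdd]) (use dir in blast)
  finally show "Sup ((\<lambda>i. \<Phi> i (u + v)) ` I) = Sup ((\<lambda>i. \<Phi> i u) ` I) + Sup ((\<lambda>i. \<Phi> i v) ` I)" .
qed

lemma order_bounded_op_between:
  fixes L U P :: "'a::order \<Rightarrow> 'b::order"
  assumes "order_bounded_op L" "order_bounded_op U" "\<And>x. L x \<le> P x" "\<And>x. P x \<le> U x"
  shows "order_bounded_op P"
  unfolding order_bounded_op_def
proof (intro allI impI)
  fix X :: "'a set" assume X: "order_bounded_set X"
  obtain a b where ab: "L ` X \<subseteq> {a..b}"
    using assms(1) X unfolding order_bounded_op_def order_bounded_set_def by blast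
  obtain c d where cd: "U ` X \<subseteq> {c..d}"
    using assms(2) X unfolding order_bounded_op_def order_bounded_set_def by blast
  have "P x \<in> {a..d}" if "x \<in> X" for x
  proof -
    have "a \<le> L x" "U x \<le> d" using ab cd that by auto
    then show ?thesis using assms(3,4)[of x] by (simp add: order_trans[of a "L x"] order_trans[of _ "U x" d])
  qed
  then show "order_bounded_set (P ` X)" unfolding order_bounded_set_def by blast
qed

lemma ury_directed_lub:
  fixes d :: "'i \<Rightarrow> ('a::{ordered_real_vector,lattice}, 'b::{ordered_real_vector,conditionally_complete_lattice}) ury"
    and I :: "'i set"
  defines "P \<equiv> \<lambda>x. Sup ((\<lambda>i. Rep_ury (d i) x) ` I)"
  assumes I: "I \<noteq> {}" and bounds: "\<And>i. i \<in> I \<Longrightarrow> 0 \<le> d i \<and> d i \<le> t"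
    and dir: "\<And>i j. i \<in> I \<Longrightarrow> j \<in> I \<Longrightarrow> \<exists>k\<in>I. d i \<le> d k \<and> d j \<le> d k"
  shows "uryson P" and "is_lub_of (d ` I) (Abs_ury P)"
proof -
  have bdd: "bdd_above ((\<lambda>i. Rep_ury (d i) x) ` I)" for x
    by (rule bdd_aboveI[of _ "Rep_ury t x"]) (use bounds in \<open>auto simp: less_eq_ury_iff\<close>)
  have upper: "Rep_ury (d i) x \<le> P x" if "i \<in> I" for i x
    unfolding P_def by (rule cSup_upper[OF imageI[OF that] bdd])
  have least: "P x \<le> u" if "\<And>i. i \<in> I \<Longrightarrow> Rep_ury (d i) x \<le> u" for x u
    unfolding P_def by (rule cSup_least) (use I that in auto)
  obtain i0 where i0: "i0 \<in> I" using I by blast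
  have "orth_additive P"
    unfolding P_def
  proof (rule orth_additive_directed_Sup[OF I _ bdd])
    show "orth_additive (Rep_ury i)" for i using uryson_Rep[of i] by (simp add: uryson_def)
    fix i j assume "i \<in> I" "j \<in> I"
    then show "\<exists>k\<in>I. (\<forall>x. Rep_ury (d i) x \<le> Rep_ury (d k) x) \<and> (\<forall>x. Rep_ury (d j) x \<le> Rep_ury (d k) x)"
      using dir by (simp add: less_eq_ury_iff)
  qed
  moreover have "order_bounded_op P"
  proof (rule order_bounded_op_between)
    show "order_bounded_op (\<lambda>x::'a. 0::'b)"
      unfolding order_bounded_op_def order_bounded_set_def by (intro allI impI exI[of _ "0::'b"]) auto
    show "order_bounded_op (Rep_ury t)" using uryson_Rep[of t] by (simp add: uryson_def)
    have "0 \<le> Rep_ury (d i0) x" for x using bounds[OF i0] by (simp add: less_eq_ury_iff Rep_ury_zero)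
    then show "0 \<le> P x" for x using upper[OF i0] by (rule order_trans)
    show "P x \<le> Rep_ury t x" for x by (rule least) (use bounds in \<open>simp add: less_eq_ury_iff\<close>)
  qed
  ultimately show uP: "uryson P" by (simp add: uryson_def)
  show "is_lub_of (d ` I) (Abs_ury P)"
    unfolding is_lub_of_def
  proof (intro conjI ballI allI impI)
    fix y assume "y \<in> d ` I"
    then show "y \<le> Abs_ury P" using upper by (auto simp: less_eq_ury_iff Rep_Abs_ury[OF uP])
  next
    fix u assume "\<forall>y\<in>d ` I. y \<le> u"
    then show "Abs_ury P \<le> u" using least by (auto simp: less_eq_ury_iff Rep_Abs_ury[OF uP])
  qed
qed

lemma vl_disj_diff_of_inf_nsmul_le:
  fixes t s p :: "'a::{ordered_ab_group_add,lattice}"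
  assumes t0: "0 \<le> t" and s0: "0 \<le> s" and below: "\<And>n. inf t (nsmul n s) \<le> p" and "p \<le> t"
    and arch: "\<And>q. 0 \<le> q \<Longrightarrow> (\<And>n. nsmul n q \<le> t) \<Longrightarrow> q = 0"
  shows "vl_disj s (t - p)"
proof -
  let ?q = "inf s (t - p)"
  have "nsmul n ?q \<le> t" for n
  proof -
    have "t - p \<le> t - inf t (nsmul n s)" using below by (rule diff_left_mono)
    also have "\<dots> = pos_part (t - nsmul n s)" by (rule diff_inf_eq_pos_part)
    finally have "t - p \<le> pos_part (t - nsmul n s)" .
    then have "?q \<le> inf (pos_part (t - nsmul n s)) s" by (rule le_infI[OF order_trans[OF inf_le2] inf_le1])
    then have "nsmul n ?q \<le> nsmul n (inf (pos_part (t - nsmul n s)) s)" by (rule nsmul_mono)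
    also have "\<dots> \<le> t" by (rule nsmul_inf_pos_part_le[OF t0 s0])
    finally show ?thesis .
  qed
  then have "?q = 0" by (rule arch[rotated]) (use s0 assms(4) in simp)
  then show ?thesis using s0 assms(4) by (simp add: vl_disj_def vl_abs_of_nonneg)
qed

lemma pi_A_eqI:
  fixes P T :: "'a::{ordered_real_vector,lattice} \<Rightarrow> 'b::{ordered_real_vector,conditionally_complete_lattice}"
  assumes P: "P \<in> U_band_gen A" and TP: "(\<lambda>x. T x - P x) \<in> U_dcompl A"
  shows "pi_A A T = P"
  unfolding pi_A_def
proof (rule the_equality)
  have uP: "uryson P" and P_disj: "\<And>Y. Y \<in> U_dcompl A \<Longrightarrow> U_disj Y P"
    using P unfolding U_band_gen_def U_dcompl_def by blast+
  have uTP: "uryson (\<lambda>x. T x - P x)" using TP unfolding U_dcompl_def by blast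
  have TP': "(\<lambda>x. T x - P x) \<in> U_dcompl (U_band_gen A)"
    unfolding U_dcompl_def
  proof (intro CollectI conjI ballI uTP)
    fix Z assume Z: "Z \<in> U_band_gen A"
    then have uZ: "uryson Z" unfolding U_band_gen_def U_dcompl_def by blast
    have "U_disj (\<lambda>x. T x - P x) Z" using Z TP unfolding U_band_gen_def U_dcompl_def by blast
    then show "U_disj Z (\<lambda>x. T x - P x)" by (simp add: U_disj_sym[OF uZ uTP])
  qed
  then show "P \<in> U_band_gen A \<and> (\<lambda>x. T x - P x) \<in> U_dcompl (U_band_gen A)" using P by blast
  fix Q assume Q: "Q \<in> U_band_gen A \<and> (\<lambda>x. T x - Q x) \<in> U_dcompl (U_band_gen A)"
  have uQ: "uryson Q" and Q_disj: "\<And>Y. Y \<in> U_dcompl A \<Longrightarrow> U_disj Y Q"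
    using Q unfolding U_band_gen_def U_dcompl_def by blast+
  have uTQ: "uryson (\<lambda>x. T x - Q x)" using Q unfolding U_dcompl_def by blast
  let ?D = "\<lambda>x. Q x - P x"
  have uD: "uryson ?D" by (rule uryson_diff[OF uQ uP])
  have "?D \<in> U_band_gen A"
    unfolding U_band_gen_def U_dcompl_def[of "U_dcompl A"]
  proof (intro CollectI conjI ballI uD)
    fix Y assume Y: "Y \<in> U_dcompl A"
    then have "uryson Y" unfolding U_dcompl_def by blast
    then show "U_disj Y ?D" by (rule U_disj_diff[OF _ uQ uP Q_disj[OF Y] P_disj[OF Y]])
  qed
  then have "U_disj ?D (\<lambda>x. T x - P x)" and "U_disj ?D (\<lambda>x. T x - Q x)"
    using Q TP' unfolding U_dcompl_def by blast+
  then have "U_disj ?D (\<lambda>x. (T x - P x) - (T x - Q x))" by (rule U_disj_diff[OF uD uTP uTQ])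
  moreover have "(\<lambda>x. (T x - P x) - (T x - Q x)) = ?D" by (rule ext) (simp add: algebra_simps)
  ultimately have "U_disj ?D ?D" by simp
  then have "?D = (\<lambda>x. 0)" by (rule U_disj_self[OF uD])
  then show "Q = P" by (simp add: fun_eq_iff)
qed

lemma U_band_gen_of_is_lub_of_inf_nsmul:
  fixes t p :: "('a::{ordered_real_vector,lattice}, 'b::{ordered_real_vector,conditionally_complete_lattice}) ury"
  assumes lub: "is_lub_of ((\<lambda>(n, S). inf t (nsmul n (Abs_ury S))) ` (UNIV \<times> A)) p"
    and "A \<noteq> {}" and t0: "0 \<le> t" and A: "\<And>S. S \<in> A \<Longrightarrow> uryson S \<and> 0 \<le> Abs_ury S"
  shows "Rep_ury p \<in> U_band_gen A"
proof -
  have disj: "vl_disj (Abs_ury Y) (inf t (nsmul n (Abs_ury S)))" if S: "S \<in> A" and Y: "Y \<in> U_dcompl A" for n S Y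
  proof -
    have "uryson Y" "U_disj S Y" using S Y by (simp_all add: U_dcompl_def)
    then have "vl_disj (Abs_ury Y) (Abs_ury S)"
      using A[OF S] by (simp add: U_disj_iff_Abs_ury vl_disj_sym[of "Abs_ury S"])
    then have "vl_disj (Abs_ury Y) (nsmul n (Abs_ury S))" by (rule vl_disj_nsmul)
    moreover have "vl_abs (inf t (nsmul n (Abs_ury S))) \<le> vl_abs (nsmul n (Abs_ury S))"
      using t0 nsmul_nonneg[of "Abs_ury S" n] A[OF S] by (simp add: vl_abs_of_nonneg)
    ultimately show ?thesis by (rule vl_disj_mono)
  qed
  obtain S0 where "S0 \<in> A" using assms(2) by blast
  show ?thesis
    unfolding U_band_gen_def U_dcompl_def[of "U_dcompl A"]
  proof (intro CollectI conjI ballI uryson_Rep)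
    fix Y assume Y: "Y \<in> U_dcompl A"
    have "vl_disj (Abs_ury Y) p"
      by (rule vl_disj_is_lub_of[OF lub, of "inf t (nsmul 0 (Abs_ury S0))"]) (use \<open>S0 \<in> A\<close> disj Y in \<open>auto intro: rev_image_eqI[of "(0, S0)"]\<close>)
    moreover have "uryson Y" using Y by (simp add: U_dcompl_def)
    ultimately show "U_disj Y (Rep_ury p)" using U_disj_Rep_ury[of "Abs_ury Y" p] by (simp add: Rep_Abs_ury)
  qed
qed

lemma U_dcompl_of_is_lub_of_inf_nsmul:
  fixes t p :: "('a::{ordered_real_vector,lattice}, 'b::{ordered_real_vector,conditionally_complete_lattice}) ury"
  assumes lub: "is_lub_of ((\<lambda>(n, S). inf t (nsmul n (Abs_ury S))) ` (UNIV \<times> A)) p"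
    and t0: "0 \<le> t" and A: "\<And>S. S \<in> A \<Longrightarrow> uryson S \<and> 0 \<le> Abs_ury S"
  shows "Rep_ury (t - p) \<in> U_dcompl A"
proof -
  have "vl_disj (Abs_ury S) (t - p)" if "S \<in> A" for S
  proof (rule vl_disj_diff_of_inf_nsmul_le[OF t0 conjunct2[OF A[OF that]]])
    show "inf t (nsmul n (Abs_ury S)) \<le> p" for n
      using lub that unfolding is_lub_of_def by force
    show "p \<le> t" using lub unfolding is_lub_of_def by force
  qed (rule ury_nsmul_bounded_eq_0)
  then have "U_disj S (Rep_ury (t - p))" if "S \<in> A" for S
    using that A U_disj_Rep_ury[of "Abs_ury S" "t - p"] by (simp add: Rep_Abs_ury)
  then show ?thesis by (simp add: U_dcompl_def uryson_Rep)
qed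

lemma increasing_set_nsmul_upper_bound:
  assumes A: "A \<subseteq> U_plus" "increasing_set A" and S: "S1 \<in> A" "S2 \<in> A"
  shows "\<exists>S\<in>A. nsmul n1 (Abs_ury S1) \<le> nsmul (max n1 n2) (Abs_ury S)
    \<and> nsmul n2 (Abs_ury S2) \<le> nsmul (max n1 n2) (Abs_ury S)"
proof -
  obtain S where "S \<in> A" "U_le S1 S" "U_le S2 S" using A(2) S unfolding increasing_set_def by blast
  moreover have "nsmul n (Abs_ury R) \<le> nsmul (max n1 n2) (Abs_ury Q)"
    if "R \<in> A" "Q \<in> A" "U_le R Q" "n \<le> max n1 n2" for R Q n
  proof -
    have uR: "uryson R" and uQ: "uryson Q" and Q0: "0 \<le> Abs_ury Q"
      using that(1,2) A(1) by (auto simp: U_plus_def positive_op_def less_eq_ury_iff Rep_Abs_ury Rep_ury_zero)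
    have "Abs_ury R \<le> Abs_ury Q" using that(3) uR uQ by (simp add: less_eq_ury_iff Rep_Abs_ury U_le_iff)
    then have "nsmul n (Abs_ury R) \<le> nsmul n (Abs_ury Q)" by (rule nsmul_mono)
    also have "\<dots> \<le> nsmul (max n1 n2) (Abs_ury Q)" by (rule nsmul_le_nsmul[OF Q0 that(4)])
    finally show ?thesis .
  qed
  ultimately show ?thesis using S max.cobounded1 max.cobounded2 by blast
qed

lemma pi_A_eq_Sup:
  fixes A :: "('a::{ordered_real_vector,lattice} \<Rightarrow> 'b::{ordered_real_vector,conditionally_complete_lattice}) set"
  assumes A: "A \<subseteq> U_plus" "A \<noteq> {}" "increasing_set A" and T: "T \<in> U_plus"
  shows "pi_A A T = (\<lambda>x. Sup ((\<lambda>(n, S). ury_inf T (\<lambda>y. nsmul n (S y)) x) ` (UNIV \<times> A)))"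
    (is "_ = ?P")
proof -
  let ?I = "UNIV \<times> A"
  have uT: "uryson T" and uA: "\<And>S. S \<in> A \<Longrightarrow> uryson S" using A(1) T by (auto dest: U_plusD)
  define t where "t = Abs_ury T"
  define d where "d = (\<lambda>(n, S). inf t (nsmul n (Abs_ury S)))"
  have t0: "0 \<le> t" and s0: "\<And>S. S \<in> A \<Longrightarrow> 0 \<le> Abs_ury S"
    using A(1) T by (auto simp: t_def less_eq_ury_iff Rep_Abs_ury Rep_ury_zero U_plus_def positive_op_def)
  have P_eq: "?P = (\<lambda>x. Sup ((\<lambda>i. Rep_ury (d i) x) ` ?I))"
  proof (rule ext, rule arg_cong[where f = Sup], rule image_cong[OF refl])
    fix x and i :: "nat \<times> ('a \<Rightarrow> 'b)" assume "i \<in> ?I"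
    moreover have "Rep_ury (nsmul n (Abs_ury S)) = (\<lambda>y. nsmul n (S y))" if "S \<in> A" for n S
      using that uA by (simp add: fun_eq_iff Rep_ury_nsmul Rep_Abs_ury)
    ultimately show "(case i of (n, S) \<Rightarrow> ury_inf T (\<lambda>y. nsmul n (S y)) x) = Rep_ury (d i) x"
      by (cases i) (simp add: d_def t_def inf_ury.rep_eq Rep_Abs_ury uT)
  qed
  have bounds: "0 \<le> d i \<and> d i \<le> t" if "i \<in> ?I" for i
    using that t0 nsmul_nonneg[OF s0] by (cases i) (simp add: d_def)
  have dir: "\<exists>k\<in>?I. d i \<le> d k \<and> d j \<le> d k" if "i \<in> ?I" "j \<in> ?I" for i j
    using that increasing_set_nsmul_upper_bound[OF A(1,3)]
    by (cases i, cases j) (fastforce simp: d_def intro: le_infI2)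
  have uP: "uryson ?P" and lub: "is_lub_of (d ` ?I) (Abs_ury ?P)"
    unfolding P_eq using ury_directed_lub[of ?I d t, OF _ bounds dir] A(2) by simp_all
  show ?thesis
  proof (rule pi_A_eqI)
    show "?P \<in> U_band_gen A"
      using U_band_gen_of_is_lub_of_inf_nsmul[OF lub[unfolded d_def] A(2) t0] uA s0 by (simp add: Rep_Abs_ury[OF uP])
    have "Rep_ury (t - Abs_ury ?P) \<in> U_dcompl A"
      using lub A(1) unfolding d_def
      by (intro U_dcompl_of_is_lub_of_inf_nsmul[OF _ t0]) (auto simp: uA s0)
    moreover have "Rep_ury (t - Abs_ury ?P) = (\<lambda>x. T x - ?P x)"
      by (simp add: fun_eq_iff Rep_ury_minus Rep_Abs_ury uP uT t_def)
    ultimately show "(\<lambda>x. T x - ?P x) \<in> U_dcompl A" by simp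
  qed
qed

section \<open>The formula for sigma_A\<close>

text \<open>excess T S e n = T e - (T \<sqinter> nS)(e); proj_set T S e \<epsilon> is the set whose supremum is
  taken in the statement.\<close>

definition excess :: "('a::{ordered_real_vector,lattice} \<Rightarrow> 'b::{ordered_real_vector,conditionally_complete_lattice})
    \<Rightarrow> ('a \<Rightarrow> 'b) \<Rightarrow> 'a \<Rightarrow> nat \<Rightarrow> 'b" where
  "excess T S e n = Sup ((\<lambda>f. T f - nsmul n (S f)) ` fragments e)"

definition proj_set :: "('a::{ordered_real_vector,lattice} \<Rightarrow> 'b::{ordered_real_vector,conditionally_complete_lattice})
    \<Rightarrow> ('a \<Rightarrow> 'b) \<Rightarrow> 'a \<Rightarrow> real \<Rightarrow> 'b set" where
  "proj_set T S e \<epsilon> = {\<rho> (T f) | f \<rho>. f \<in> fragments e \<and> band_projection \<rho> \<and> \<rho> (S f) \<le> \<epsilon> *\<^sub>R S e}"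

lemma excess_bdd:
  assumes "T \<in> U_plus" "S \<in> U_plus"
  shows "bdd_above ((\<lambda>f. T f - nsmul n (S f)) ` fragments e)"
proof (rule bdd_aboveI[of _ "T e"])
  fix w assume "w \<in> (\<lambda>f. T f - nsmul n (S f)) ` fragments e"
  then obtain f where f: "f \<in> fragments e" "w = T f - nsmul n (S f)" by auto
  have "0 \<le> nsmul n (S f)" by (rule nsmul_nonneg[OF U_plusD(2)[OF assms(2)]])
  then have "w \<le> T f" using f(2) by simp
  also have "T f \<le> T e" by (rule U_plus_fragment_le[OF assms(1) f(1)])
  finally show "w \<le> T e" .
qed

lemma excess_upper:
  assumes "T \<in> U_plus" "S \<in> U_plus" "f \<in> fragments e"
  shows "T f - nsmul n (S f) \<le> excess T S e n"
  unfolding excess_def by (rule cSup_upper[OF imageI[OF assms(3)] excess_bdd[OF assms(1,2)]])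

lemma excess_nonneg:
  assumes "T \<in> U_plus" "S \<in> U_plus"
  shows "0 \<le> excess T S e n"
proof -
  have "T 0 - nsmul n (S 0) \<le> excess T S e n" by (rule excess_upper[OF assms fragments_0])
  then show ?thesis using orth_additive_0[OF uryson_orth_additive[OF U_plusD(1)[OF assms(1)]]]
    orth_additive_0[OF uryson_orth_additive[OF U_plusD(1)[OF assms(2)]]] by simp
qed

lemma proj_set_0:
  fixes T S :: "'a::{ordered_real_vector,lattice} \<Rightarrow> 'b::{ordered_real_vector,conditionally_complete_lattice}"
  assumes "T \<in> U_plus" "S \<in> U_plus" "0 \<le> \<epsilon>"
  shows "0 \<in> proj_set T S e \<epsilon>"
proof -
  have T0: "T 0 = 0" by (rule orth_additive_0[OF uryson_orth_additive[OF U_plusD(1)[OF assms(1)]]])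
  have S0: "S 0 = 0" by (rule orth_additive_0[OF uryson_orth_additive[OF U_plusD(1)[OF assms(2)]]])
  have "0 \<le> \<epsilon> *\<^sub>R S e" using assms(3) U_plusD(2)[OF assms(2)] by (rule scaleR_nonneg_nonneg)
  then have "\<exists>f \<rho>. 0 = \<rho> (T f) \<and> f \<in> fragments e \<and> band_projection \<rho> \<and> \<rho> (S f) \<le> \<epsilon> *\<^sub>R S e"
    by (intro exI[of _ 0] exI[of _ "\<lambda>x::'b. x"]) (use band_projection_id S0 T0 in simp)
  then show ?thesis unfolding proj_set_def by blast
qed

lemma proj_set_bdd:
  assumes "T \<in> U_plus"
  shows "bdd_above (proj_set T S e \<epsilon>)"
proof (rule bdd_aboveI[of _ "T e"])
  fix w assume "w \<in> proj_set T S e \<epsilon>"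
  then obtain f \<rho> where f: "f \<in> fragments e" "band_projection \<rho>" "w = \<rho> (T f)" unfolding proj_set_def by blast
  have "w \<le> pos_part (T f)" using band_projection_le_pos_part[OF f(2)] f(3) by simp
  also have "pos_part (T f) = T f" using U_plusD(2)[OF assms] by (simp add: pos_part_def sup.absorb1)
  also have "T f \<le> T e" by (rule U_plus_fragment_le[OF assms f(1)])
  finally show "w \<le> T e" .
qed

lemma Sup_proj_set_nonneg:
  assumes "T \<in> U_plus" "S \<in> U_plus" "0 \<le> \<epsilon>"
  shows "0 \<le> Sup (proj_set T S e \<epsilon>)"
  by (rule cSup_upper[OF proj_set_0[OF assms] proj_set_bdd[OF assms(1)]])

lemma Sup_proj_set_le:
  assumes T: "T \<in> U_plus" and S: "S \<in> U_plus" and e0: "0 \<le> \<epsilon>"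
  shows "Sup (proj_set T S e \<epsilon>) \<le> excess T S e n + nsmul n (\<epsilon> *\<^sub>R S e)"
proof (rule cSup_least)
  show "proj_set T S e \<epsilon> \<noteq> {}" using proj_set_0[OF T S e0] by blast
  fix w assume "w \<in> proj_set T S e \<epsilon>"
  then obtain f \<rho> where f: "f \<in> fragments e" and bp: "band_projection \<rho>" and w: "w = \<rho> (T f)"
    and le: "\<rho> (S f) \<le> \<epsilon> *\<^sub>R S e" unfolding proj_set_def by blast
  have "\<rho> (T f) = \<rho> ((T f - nsmul n (S f)) + nsmul n (S f))" by simp
  also have "\<dots> = \<rho> (T f - nsmul n (S f)) + \<rho> (nsmul n (S f))" by (rule band_projection_add[OF bp])
  also have "\<dots> = \<rho> (T f - nsmul n (S f)) + nsmul n (\<rho> (S f))" by (simp only: band_projection_nsmul[OF bp])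
  also have "\<dots> \<le> pos_part (T f - nsmul n (S f)) + nsmul n (\<epsilon> *\<^sub>R S e)"
    by (rule add_mono[OF band_projection_le_pos_part[OF bp] nsmul_mono[OF le]])
  also have "pos_part (T f - nsmul n (S f)) \<le> excess T S e n"
    unfolding pos_part_def by (rule le_supI[OF excess_upper[OF T S f] excess_nonneg[OF T S]])
  finally show "w \<le> excess T S e n + nsmul n (\<epsilon> *\<^sub>R S e)" using w by (simp add: add_right_mono)
qed

lemma excess_le:
  fixes T S :: "'a::{ordered_real_vector,lattice} \<Rightarrow> 'b::{ordered_real_vector,conditionally_complete_lattice}"
  assumes T: "T \<in> U_plus" and S: "S \<in> U_plus" and ep: "0 < \<epsilon>"
  shows "excess T S e n \<le> Sup (proj_set T S e \<epsilon>) + band_part (\<epsilon> *\<^sub>R S e) (pos_part (T e - nsmul n (\<epsilon> *\<^sub>R S e)))"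
  unfolding excess_def
proof (rule cSup_least)
  show "(\<lambda>f. T f - nsmul n (S f)) ` fragments e \<noteq> {}" by simp
  let ?b = "\<epsilon> *\<^sub>R S e"
  have b0: "0 \<le> ?b" using ep U_plusD(2)[OF S] by (simp add: scaleR_nonneg_nonneg)
  fix w assume "w \<in> (\<lambda>f. T f - nsmul n (S f)) ` fragments e"
  then obtain f where f: "f \<in> fragments e" and w: "w = T f - nsmul n (S f)" by auto
  have Sf0: "0 \<le> S f" by (rule U_plusD(2)[OF S])
  define v where "v = pos_part (S f - ?b)"
  define \<pi> where "\<pi> = band_proj v"
  have v0: "0 \<le> v" unfolding v_def by (rule pos_part_nonneg)
  \<comment> \<open>removing the band on which S f exceeds \<epsilon> S e leaves an element of the projection set\<close>
  have bp: "band_projection (\<lambda>x. x - \<pi> x)" unfolding \<pi>_def by (rule band_projection_diff_band_proj[OF v0])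
  have "S f - \<pi> (S f) \<le> ?b" unfolding \<pi>_def v_def by (rule band_proj_cut(1)[OF b0 Sf0])
  then have "T f - \<pi> (T f) \<in> proj_set T S e \<epsilon>"
    unfolding proj_set_def using f bp by (intro CollectI exI[of _ f] exI[of _ "\<lambda>x. x - \<pi> x"]) simp
  then have rest: "T f - \<pi> (T f) \<le> Sup (proj_set T S e \<epsilon>)" by (rule cSup_upper[OF _ proj_set_bdd[OF T]])
  have "nsmul n (\<pi> ?b) \<le> nsmul n (S f)"
    unfolding \<pi>_def v_def by (rule nsmul_mono[OF band_proj_cut(2)[OF b0 Sf0]])
  then have "\<pi> (T f) - nsmul n (S f) \<le> \<pi> (T f - nsmul n ?b)"
    unfolding \<pi>_def by (simp add: band_proj_diff[OF v0] band_proj_nsmul[OF v0])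
  also have "\<dots> \<le> band_part v (pos_part (T f - nsmul n ?b))" unfolding \<pi>_def by (rule band_proj_le)
  also have "\<dots> \<le> band_part v (pos_part (T e - nsmul n ?b))"
    using U_plus_fragment_le[OF T f] by (intro band_part_mono) (simp add: pos_part_def le_supI1)
  also have "\<dots> \<le> band_part ?b (pos_part (T e - nsmul n ?b))"
  proof (rule band_part_le_scaleR_generator[OF U_plusD(2)[OF S] ep])
    have "v \<le> S f" unfolding v_def pos_part_def using b0 Sf0 by simp
    also have "S f \<le> S e" by (rule U_plus_fragment_le[OF S f])
    finally show "v \<le> S e" .
  qed
  finally have "\<pi> (T f) - nsmul n (S f) \<le> band_part ?b (pos_part (T e - nsmul n ?b))" .
  with rest show "w \<le> Sup (proj_set T S e \<epsilon>) + band_part ?b (pos_part (T e - nsmul n ?b))"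
    unfolding w by (metis add_mono diff_add_cancel add_diff_eq)
qed

lemma le_excess_of_le_Sup_proj_set:
  assumes T: "T \<in> U_plus" and S: "S \<in> U_plus" and le: "\<And>\<epsilon>. 0 < \<epsilon> \<Longrightarrow> c \<le> Sup (proj_set T S e \<epsilon>)"
  shows "c \<le> excess T S e n"
proof -
  have "c - excess T S e n \<le> 0"
  proof (rule le_0_of_le_nsmul_scaleR[OF U_plusD(2)[OF S]])
    fix \<epsilon> :: real assume "0 < \<epsilon>"
    then have "c \<le> excess T S e n + nsmul n (\<epsilon> *\<^sub>R S e)"
      using le Sup_proj_set_le[OF T S] by (meson less_imp_le order_trans)
    then show "c - excess T S e n \<le> nsmul n (\<epsilon> *\<^sub>R S e)" by (simp add: diff_le_eq add.commute)
  qed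
  then show ?thesis by simp
qed

lemma le_Sup_proj_set_of_le_excess:
  assumes T: "T \<in> U_plus" and S: "S \<in> U_plus" and ep: "0 < \<epsilon>" and le: "\<And>n. c \<le> excess T S e n"
  shows "c \<le> Sup (proj_set T S e \<epsilon>)"
proof -
  have "0 \<le> \<epsilon> *\<^sub>R S e" using ep U_plusD(2)[OF S] by (simp add: scaleR_nonneg_nonneg)
  then have "c - Sup (proj_set T S e \<epsilon>) \<le> 0"
  proof (rule le_0_of_le_band_part[OF U_plusD(2)[OF T]])
    fix n
    show "c - Sup (proj_set T S e \<epsilon>) \<le> band_part (\<epsilon> *\<^sub>R S e) (pos_part (T e - nsmul n (\<epsilon> *\<^sub>R S e)))"
      using order_trans[OF le excess_le[OF T S ep]] by (simp add: diff_le_eq add.commute)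
  qed
  then show ?thesis by simp
qed

lemma sigma_A_eq_Inf_excess:
  fixes A :: "('a::{ordered_real_vector,lattice} \<Rightarrow> 'b::{ordered_real_vector,conditionally_complete_lattice}) set"
  assumes A: "A \<subseteq> U_plus" "A \<noteq> {}" "increasing_set A" and T: "T \<in> U_plus"
  shows "sigma_A A T e = Inf ((\<lambda>(n, S). excess T S e n) ` (UNIV \<times> A))"
proof -
  have uT: "uryson T" and uA: "\<And>S. S \<in> A \<Longrightarrow> uryson S" using A(1) T by (auto dest: U_plusD)
  let ?\<Phi> = "\<lambda>(n, S). ury_inf T (\<lambda>y. nsmul n (S y)) e"
  have bdd: "bdd_above (?\<Phi> ` (UNIV \<times> A))"
  proof (rule bdd_aboveI[of _ "T e"])
    fix y assume "y \<in> ?\<Phi> ` (UNIV \<times> A)"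
    then obtain n S where "S \<in> A" "y = ury_inf T (\<lambda>y. nsmul n (S y)) e" by auto
    then show "y \<le> T e" using ury_inf_le1[OF uT uryson_nsmul[OF uA]] by simp
  qed
  have "sigma_A A T e = T e - Sup (?\<Phi> ` (UNIV \<times> A))"
    unfolding sigma_A_def pi_A_eq_Sup[OF assms] by simp
  also have "\<dots> = Inf ((\<lambda>i. T e - ?\<Phi> i) ` (UNIV \<times> A))"
    by (subst diff_cSup) (use A(2) bdd in \<open>simp_all add: image_image\<close>)
  also have "\<dots> = Inf ((\<lambda>(n, S). excess T S e n) ` (UNIV \<times> A))"
    using uA by (intro arg_cong[where f = Inf] image_cong)
      (auto simp: excess_def diff_ury_inf[OF uT uryson_nsmul])
  finally show ?thesis .
qed

lemma Inf_excess_eq_Inf_Sup_proj_set: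
  fixes A :: "('a::{ordered_real_vector,lattice} \<Rightarrow> 'b::{ordered_real_vector,conditionally_complete_lattice}) set"
  assumes T: "T \<in> U_plus" and A: "A \<subseteq> U_plus" "A \<noteq> {}"
  shows "Inf ((\<lambda>(n, S). excess T S e n) ` (UNIV \<times> A)) =
    Inf ((\<lambda>(\<epsilon>, S). Sup (proj_set T S e \<epsilon>)) ` {(\<epsilon>, S). \<epsilon> > (0::real) \<and> S \<in> A})"
    (is "Inf ?V = Inf ?M")
proof -
  have SA: "\<And>S. S \<in> A \<Longrightarrow> S \<in> U_plus" using A(1) by blast
  obtain S0 where "S0 \<in> A" using A(2) by blast
  then have "(0, S0) \<in> UNIV \<times> A" "(1, S0) \<in> {(\<epsilon>, S). \<epsilon> > (0::real) \<and> S \<in> A}" by simp_all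
  then have ne: "?V \<noteq> {}" "?M \<noteq> {}" by blast+
  have bddV: "bdd_below ?V" and bddM: "bdd_below ?M"
    using excess_nonneg[OF T SA] Sup_proj_set_nonneg[OF T SA] by (force intro: bdd_belowI[of _ 0])+
  have "Inf ?M \<le> Inf ?V"
  proof (rule cInf_greatest[OF ne(1)])
    fix v assume "v \<in> ?V"
    then obtain n S where S: "S \<in> A" and v: "v = excess T S e n" by auto
    have "Inf ?M \<le> Sup (proj_set T S e \<epsilon>)" if "0 < \<epsilon>" for \<epsilon>
      using that S by (intro cInf_lower[OF _ bddM]) auto
    then show "Inf ?M \<le> v" unfolding v by (rule le_excess_of_le_Sup_proj_set[OF T SA[OF S]])
  qed
  moreover have "Inf ?V \<le> Inf ?M"
  proof (rule cInf_greatest[OF ne(2)])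
    fix m assume "m \<in> ?M"
    then obtain \<epsilon> S where S: "S \<in> A" "0 < \<epsilon>" and m: "m = Sup (proj_set T S e \<epsilon>)" by auto
    have "Inf ?V \<le> excess T S e n" for n using S by (intro cInf_lower[OF _ bddV]) auto
    then show "Inf ?V \<le> m" unfolding m by (rule le_Sup_proj_set_of_le_excess[OF T SA[OF S(1)] S(2)])
  qed
  ultimately show ?thesis by simp
qed

theorem mainTheorem2:
  fixes A :: "('a::{ordered_real_vector,lattice} \<Rightarrow> 'b::{ordered_real_vector,conditionally_complete_lattice}) set"
    and T :: "'a \<Rightarrow> 'b" and e :: 'a
  assumes "A \<subseteq> U_plus" and "A \<noteq> {}" and "increasing_set A" and "T \<in> U_plus"
  shows "sigma_A A T e =
    (INF (\<epsilon>, S) \<in> {(\<epsilon>, S). \<epsilon> > (0::real) \<and> S \<in> A}.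
       Sup {\<rho> (T f) | f \<rho>. f \<in> fragments e \<and> band_projection \<rho> \<and> \<rho> (S f) \<le> \<epsilon> *\<^sub>R S e})"
  using sigma_A_eq_Inf_excess[OF assms] Inf_excess_eq_Inf_Sup_proj_set[OF assms(4,1,2)]
  by (simp add: proj_set_def)

end
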